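(* Let $X$ be a finite simplicial complex with $n$ simplices and let $F,G:X\to\mathbb{R}^2$ be functions such that $F(\tau)\le F(\sigma)$ and $G(\tau)\le G(\sigma)$ whenever $\tau\subset\sigma$ are simplices of $X$. Let $\mathcal{X}$ and $\mathcal{Y}$ be the sublevel set bi-filtrations of $F$ and $G$. Let $\phi$ be an absolutely bounded and internally stable feature map for mono-filtrations and $R\subset\mathbb{R}^2$ a bounded axis-aligned rectangle whose bottom-left corner is the origin. Then $$\|\Phi_{\mathcal{X}}-\Phi_{\mathcal{Y}}\|_{L^2(\Delta^{(2)})}\le C\cdot n\cdot \mathrm{area}(R)\cdot\|F-G\|_\infty$$ for some constant $C$.
   Context: For $p,q\in\mathbb{R}^2$ write $p\le q$ (resp. $p<q$) if both coordinates satisfy $\le$ (resp. $<$). The sublevel set bi-filtration of $F$ assigns to $p\in\mathbb{R}^2$ the subcomplex $\{\sigma\in X: F(\sigma)\le p\}$. $\|F-G\|_\infty:=\sup_{\sigma\in X}\|F(\sigma)-G(\sigma)\|_\infty$. A mono-filtration of $X$ assigns nested subcomplexes $\mathcal{X}(\alpha)$, $\alpha\in\mathbb{R}$; its size is the number of simplices of $X$. Let $\mathcal{L}$ be the set of non-vertical lines in $\mathbb{R}^2$ with positive slope. Each $\ell\in\mathcal{L}$ meets $x=-y$ in a unique point $b$ and is parametrized as $b+\lambda a$ with $a=(a_1,a_2)$ its unit direction vector with positive coordinates; $\hat{\ell}:=\min\{a_1,a_2\}$. The slice $\mathcal{X}_\ell$ is the mono-filtration $\alpha\mapsto\mathcal{X}(b+\alpha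 a)$. $d_B$ denotes the bottleneck distance between persistence diagrams of mono-filtrations. Let $\Delta^{(1)}:=\{(x_1,x_2):x_1<x_2\}$. A feature map $\phi$ assigns to each mono-filtration $\mathcal{X}$ a function $\phi_{\mathcal{X}}\in L^2(\Delta^{(1)})$; it is absolutely bounded if there is $v_1>0$ with $0\le\phi_{\mathcal{X}}(x)\le v_1 n$ for all mono-filtrations of size $n$ and $x\in\Delta^{(1)}$, and internally stable if there is $v_3>0$ with $|\phi_{\mathcal{X}}(x)-\phi_{\mathcal{Y}}(x)|\le v_3 n\, d_B(\mathcal{X},\mathcal{Y})$ for all mono-filtrations of size $n$ and $x\in\Delta^{(1)}$. Let $\Delta^{(2)}:=\{(p,q)\in\mathbb{R}^2\times\mathbb{R}^2:p<q\}\subset\mathbb{R}^4$ with Lebesgue measure. For $(p,q)\in\Delta^{(2)}$ let $\ell\in\mathcal{L}$ be the line through $p,q$ and $\lambda_p<\lambda_q$ the parameters with $p=b+\lambda_pa$, $q=b+\lambda_qa$; define $\Phi_{\mathcal{X}}(p,q):=\chi_R(p)\chi_R(q)\,\hat{\ell}\,\phi_{\mathcal{X}_\ell}(\lambda_p,\lambda_q)$, with $\chi_R$ the indicator of $R$. *)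

theory Defs
  imports "HOL-Analysis.Analysis" "HOL-Library.Multiset" "HOL-Library.Discrete_Functions"
begin

definition vle :: "real \<times> real \<Rightarrow> real \<times> real \<Rightarrow> bool" where
  "vle p q \<longleftrightarrow> fst p \<le> fst q \<and> snd p \<le> snd q"

definition vlt :: "real \<times> real \<Rightarrow> real \<times> real \<Rightarrow> bool" where
  "vlt p q \<longleftrightarrow> fst p < fst q \<and> snd p < snd q"

definition fin_simplicial_complex :: "'v set set \<Rightarrow> bool" where
  "fin_simplicial_complex K \<longleftrightarrow> finite K \<and>
     (\<forall>\<sigma>\<in>K. finite \<sigma> \<and> \<sigma> \<noteq> {} \<and> (\<forall>\<tau>. \<tau> \<subseteq> \<sigma> \<and> \<tau> \<noteq> {} \<longrightarrow> \<tau> \<in> K))"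

definition subcomplex :: "'v set set \<Rightarrow> 'v set set \<Rightarrow> bool" where
  "subcomplex L K \<longleftrightarrow> L \<subseteq> K \<and> (\<forall>\<sigma>\<in>L. \<forall>\<tau>\<in>K. \<tau> \<subseteq> \<sigma> \<longrightarrow> \<tau> \<in> L)"

type_synonym 'v monofilt = "'v set set \<times> (real \<Rightarrow> 'v set set)"

definition mono_filtration :: "'v monofilt \<Rightarrow> bool" where
  "mono_filtration M \<longleftrightarrow> fin_simplicial_complex (fst M) \<and>
     (\<forall>\<alpha>. subcomplex (snd M \<alpha>) (fst M)) \<and>
     (\<forall>\<alpha> \<beta>. \<alpha> \<le> \<beta> \<longrightarrow> snd M \<alpha> \<subseteq> snd M \<beta>)"

definition mf_size :: "'v monofilt \<Rightarrow> nat" where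
  "mf_size M = card (fst M)"

text \<open>Z/2-chains are sets of simplices, addition is symmetric difference.\<close>

definition symdiff :: "'a set \<Rightarrow> 'a set \<Rightarrow> 'a set" where
  "symdiff A B = (A - B) \<union> (B - A)"

definition set_plus2 :: "'a set set \<Rightarrow> 'a set set \<Rightarrow> 'a set set" where
  "set_plus2 U V = {symdiff u v | u v. u \<in> U \<and> v \<in> V}"

definition ksimplices :: "nat \<Rightarrow> 'v set set \<Rightarrow> 'v set set" where
  "ksimplices k K = {\<sigma>\<in>K. card \<sigma> = Suc k}"

definition chains :: "nat \<Rightarrow> 'v set set \<Rightarrow> 'v set set set" where
  "chains k K = Pow (ksimplices k K)"

definition bd_simplex :: "'v set \<Rightarrow> 'v set set" where
  "bd_simplex \<sigma> = (if 2 \<le> card \<sigma> then (\<lambda>v. \<sigma> - {v}) ` \<sigma> else {})"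

definition bd :: "'v set set \<Rightarrow> 'v set set" where
  "bd c = {\<tau>. odd (card {\<sigma>\<in>c. \<tau> \<in> bd_simplex \<sigma>})}"

definition cycles :: "nat \<Rightarrow> 'v set set \<Rightarrow> 'v set set set" where
  "cycles k K = {c \<in> chains k K. bd c = {}}"

definition boundaries :: "nat \<Rightarrow> 'v set set \<Rightarrow> 'v set set set" where
  "boundaries k L = bd ` chains (Suc k) L"

text \<open>Dimension of a finite Z/2-vector space V (so card V = 2 ^ dim).\<close>
definition gf2_dim :: "'a set \<Rightarrow> nat" where
  "gf2_dim V = floor_log (card V)"

text \<open>Rank of the map H_k(K) -> H_k(L) induced by inclusion K in L:
  dim ((Z_k(K) + B_k(L)) / B_k(L)).\<close>
definition pers_rank :: "nat \<Rightarrow> 'v set set \<Rightarrow> 'v set set \<Rightarrow> nat" where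
  "pers_rank k K L = gf2_dim (set_plus2 (cycles k K) (boundaries k L)) - gf2_dim (boundaries k L)"

definition filt_at :: "'v monofilt \<Rightarrow> ereal \<Rightarrow> 'v set set" where
  "filt_at M a = (if a = \<infinity> then (\<Union>\<alpha>. snd M \<alpha>)
                  else if a = -\<infinity> then (\<Inter>\<alpha>. snd M \<alpha>)
                  else snd M (real_of_ereal a))"

definition rk :: "nat \<Rightarrow> 'v monofilt \<Rightarrow> ereal \<Rightarrow> ereal \<Rightarrow> int" where
  "rk k M a b = int (pers_rank k (filt_at M a) (filt_at M b))"

text \<open>Multiplicity of the point (b,d), b < d, in the degree-k persistence diagram,
  by inclusion-exclusion of the rank function:
  mu(b,d) = r(b+,d-) - r(b-,d-) - r(b+,d+) + r(b-,d+) for small eps > 0,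
  with the conventions r(b-, _) = 0 if b = -oo and r(_, d+) = 0 if d = +oo.\<close>
definition mult_expr :: "nat \<Rightarrow> 'v monofilt \<Rightarrow> ereal \<Rightarrow> ereal \<Rightarrow> real \<Rightarrow> int" where
  "mult_expr k M b d \<epsilon> =
     (let bp = (if b = -\<infinity> then -\<infinity> else b + ereal \<epsilon>);
          bm = b - ereal \<epsilon>;
          dm = (if d = \<infinity> then \<infinity> else d - ereal \<epsilon>);
          dp = d + ereal \<epsilon>;
          r = (\<lambda>x y. rk k M x y)
      in r bp dm
         - (if b = -\<infinity> then 0 else r bm dm)
         - (if d = \<infinity> then 0 else r bp dp)
         + (if b = -\<infinity> \<or> d = \<infinity> then 0 else r bm dp))"

definition multiplicity_pd :: "nat \<Rightarrow> 'v monofilt \<Rightarrow> ereal \<Rightarrow> ereal \<Rightarrow> nat" where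
  "multiplicity_pd k M b d =
     nat (THE m. eventually (\<lambda>\<epsilon>. mult_expr k M b d \<epsilon> = m) (at_right (0::real)))"

text \<open>The degree-k persistence diagram (off-diagonal points (b,d), b < d, with multiplicity).
  For mono-filtrations of finite complexes the support is finite.\<close>
definition pdiagram :: "nat \<Rightarrow> 'v monofilt \<Rightarrow> (ereal \<times> ereal) multiset" where
  "pdiagram k M = Abs_multiset (\<lambda>(b, d). if b < d then multiplicity_pd k M b d else 0)"

definition edist :: "ereal \<Rightarrow> ereal \<Rightarrow> ereal" where
  "edist x y = (if x = y then 0 else \<bar>x - y\<bar>)"

definition pt_dist :: "ereal \<times> ereal \<Rightarrow> ereal \<times> ereal \<Rightarrow> ereal" where
  "pt_dist p q = max (edist (fst p) (fst q)) (edist (snd p) (snd q))"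

text \<open>l-infinity distance of a point to the diagonal.\<close>
definition diag_dist :: "ereal \<times> ereal \<Rightarrow> ereal" where
  "diag_dist p = (snd p - fst p) / 2"

definition partial_matching ::
  "((ereal \<times> ereal) \<times> (ereal \<times> ereal)) multiset \<Rightarrow> (ereal \<times> ereal) multiset \<Rightarrow> (ereal \<times> ereal) multiset \<Rightarrow> bool" where
  "partial_matching Mt A B \<longleftrightarrow> image_mset fst Mt \<subseteq># A \<and> image_mset snd Mt \<subseteq># B"

definition matching_cost ::
  "((ereal \<times> ereal) \<times> (ereal \<times> ereal)) multiset \<Rightarrow> (ereal \<times> ereal) multiset \<Rightarrow> (ereal \<times> ereal) multiset \<Rightarrow> ereal" where
  "matching_cost Mt A B = Sup (insert 0
      ((\<lambda>(p, q). pt_dist p q) ` set_mset Mt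
       \<union> diag_dist ` set_mset (A - image_mset fst Mt)
       \<union> diag_dist ` set_mset (B - image_mset snd Mt)))"

definition bottleneck :: "(ereal \<times> ereal) multiset \<Rightarrow> (ereal \<times> ereal) multiset \<Rightarrow> ereal" where
  "bottleneck A B = (INF Mt \<in> {Mt. partial_matching Mt A B}. matching_cost Mt A B)"

definition d_B :: "'v monofilt \<Rightarrow> 'v monofilt \<Rightarrow> ereal" where
  "d_B M N = (SUP k. bottleneck (pdiagram k M) (pdiagram k N))"

definition Delta1 :: "(real \<times> real) set" where
  "Delta1 = {x. fst x < snd x}"

definition feature_map :: "('v monofilt \<Rightarrow> real \<times> real \<Rightarrow> real) \<Rightarrow> bool" where
  "feature_map \<phi> \<longleftrightarrow> (\<forall>M. mono_filtration M \<longrightarrow>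
      set_borel_measurable lborel Delta1 (\<phi> M) \<and> set_integrable lborel Delta1 (\<lambda>x. (\<phi> M x)\<^sup>2))"

definition absolutely_bounded :: "('v monofilt \<Rightarrow> real \<times> real \<Rightarrow> real) \<Rightarrow> bool" where
  "absolutely_bounded \<phi> \<longleftrightarrow> (\<exists>v1>0. \<forall>M x. mono_filtration M \<and> x \<in> Delta1 \<longrightarrow>
      0 \<le> \<phi> M x \<and> \<phi> M x \<le> v1 * real (mf_size M))"

definition internally_stable :: "('v monofilt \<Rightarrow> real \<times> real \<Rightarrow> real) \<Rightarrow> bool" where
  "internally_stable \<phi> \<longleftrightarrow> (\<exists>v3>0. \<forall>M N n x.
      mono_filtration M \<and> mono_filtration N \<and> mf_size M = n \<and> mf_size N = n \<and> x \<in> Delta1 \<longrightarrow>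
      ereal \<bar>\<phi> M x - \<phi> N x\<bar> \<le> ereal (v3 * real n) * d_B M N)"

definition monotone_filter :: "'v set set \<Rightarrow> ('v set \<Rightarrow> real \<times> real) \<Rightarrow> bool" where
  "monotone_filter K F \<longleftrightarrow> (\<forall>\<sigma>\<in>K. \<forall>\<tau>\<in>K. \<tau> \<subseteq> \<sigma> \<longrightarrow> vle (F \<tau>) (F \<sigma>))"

definition sublevel_bifilt :: "'v set set \<Rightarrow> ('v set \<Rightarrow> real \<times> real) \<Rightarrow> real \<times> real \<Rightarrow> 'v set set" where
  "sublevel_bifilt K F p = {\<sigma>\<in>K. vle (F \<sigma>) p}"

definition sup_dist :: "'v set set \<Rightarrow> ('v set \<Rightarrow> real \<times> real) \<Rightarrow> ('v set \<Rightarrow> real \<times> real) \<Rightarrow> real" where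
  "sup_dist K F G = Max (insert 0 ((\<lambda>\<sigma>. max \<bar>fst (F \<sigma>) - fst (G \<sigma>)\<bar> \<bar>snd (F \<sigma>) - snd (G \<sigma>)\<bar>) ` K))"

text \<open>For p < q: the unit (Euclidean) direction a of the line through p and q, the point b
  where it meets x = -y, and the parameters lambda_p < lambda_q with p = b + lambda_p a,
  q = b + lambda_q a.\<close>
definition line_dir :: "real \<times> real \<Rightarrow> real \<times> real \<Rightarrow> real \<times> real" where
  "line_dir p q = (1 / norm (q - p)) *\<^sub>R (q - p)"

definition line_lam_p :: "real \<times> real \<Rightarrow> real \<times> real \<Rightarrow> real" where
  "line_lam_p p q = (fst p + snd p) / (fst (line_dir p q) + snd (line_dir p q))"

definition line_lam_q :: "real \<times> real \<Rightarrow> real \<times> real \<Rightarrow> real" where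
  "line_lam_q p q = line_lam_p p q + norm (q - p)"

definition line_base :: "real \<times> real \<Rightarrow> real \<times> real \<Rightarrow> real \<times> real" where
  "line_base p q = p - line_lam_p p q *\<^sub>R line_dir p q"

definition line_hat :: "real \<times> real \<Rightarrow> real \<times> real \<Rightarrow> real" where
  "line_hat p q = min (fst (line_dir p q)) (snd (line_dir p q))"

definition slice :: "'v set set \<Rightarrow> (real \<times> real \<Rightarrow> 'v set set) \<Rightarrow> real \<times> real \<Rightarrow> real \<times> real \<Rightarrow> 'v monofilt" where
  "slice K B p q = (K, \<lambda>\<alpha>. B (line_base p q + \<alpha> *\<^sub>R line_dir p q))"

definition Delta2 :: "((real \<times> real) \<times> (real \<times> real)) set" where
  "Delta2 = {z. vlt (fst z) (snd z)}"

definition Phi :: "('v monofilt \<Rightarrow> real \<times> real \<Rightarrow> real) \<Rightarrow> (real \<times> real) set \<Rightarrow> 'v set set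
    \<Rightarrow> (real \<times> real \<Rightarrow> 'v set set) \<Rightarrow> (real \<times> real) \<times> (real \<times> real) \<Rightarrow> real" where
  "Phi \<phi> R K B z = (let p = fst z; q = snd z in
      indicator R p * indicator R q * line_hat p q *
      \<phi> (slice K B p q) (line_lam_p p q, line_lam_q p q))"

definition L2_dist_sq :: "(((real \<times> real) \<times> (real \<times> real)) \<Rightarrow> real) \<Rightarrow> (((real \<times> real) \<times> (real \<times> real)) \<Rightarrow> real) \<Rightarrow> ennreal" where
  "L2_dist_sq f g = (\<integral>\<^sup>+ z \<in> Delta2. ennreal ((f z - g z)\<^sup>2) \<partial>lborel)"

end

theory Submission
  imports Defs
begin

(* Slicing along the line through p < q turns the sublevel bi-filtration of F into the sublevel
   filtration of the real function slice_fun F p q on simplices, and slice_fun F p q differs from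
   slice_fun G p q by at most sup_dist K F G / line_hat p q.  The factor line_hat p q in Phi cancels
   this, so it suffices to show |phi(f) - phi(g)| <= v3 * n * D for face-monotone f, g on K with
   |f - g| <= D: the integrand of the L2 distance is then at most (v3 * n * sup_dist K F G)^2 on
   R x R and zero elsewhere.

   Internal stability reduces this to the bottleneck bound d_B <= D.  We prove it when f and g
   order the simplices in the same way: then the diagram of g is the diagram of f with every value
   f(sigma) relabelled to g(sigma), a matching that moves no point by more than D.  The general case
   follows along the homotopy (1 - t) f + t g, whose induced order changes only at finitely many
   crossing times; the estimate adds up over the intervals between them.

   Multiplicities of diagram points are inclusion-exclusion combinations of persistent ranks, and
   conversely rank(S, T) is the sum of the multiplicities of the points born in S and dying outside
   T (proved by peeling off one value of f at a time).  Nonnegativity of multiplicities is the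
   modular law dim (H + J) + dim (H inter J) = dim H + dim J for Z/2 vector spaces of chains. *)

section \<open>Linear algebra over Z/2 on sets of sets\<close>

lemma symdiff_commute: "symdiff a b = symdiff b a"
  unfolding symdiff_def by blast

lemma symdiff_assoc: "symdiff (symdiff a b) c = symdiff a (symdiff b c)"
  unfolding symdiff_def by blast

lemma symdiff_empty_left [simp]: "symdiff {} a = a"
  and symdiff_empty_right [simp]: "symdiff a {} = a"
  and symdiff_self [simp]: "symdiff a a = {}"
  and symdiff_cancel_left [simp]: "symdiff a (symdiff a b) = b"
  unfolding symdiff_def by blast+

lemma symdiff_subset: "a \<subseteq> U \<Longrightarrow> b \<subseteq> U \<Longrightarrow> symdiff a b \<subseteq> U"
  unfolding symdiff_def by blast

lemma symdiff_left_inject: "symdiff a b = symdiff a c \<Longrightarrow> b = c"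
  by (metis symdiff_cancel_left)

lemma symdiff_swap: "symdiff a b = symdiff c d \<Longrightarrow> symdiff a c = symdiff b d"
  unfolding symdiff_def set_eq_iff by blast

lemma symdiff_shift: "symdiff (symdiff a i) (symdiff b i) = symdiff a b"
  unfolding symdiff_def by blast

definition gf2_subspace :: "'a set set \<Rightarrow> bool" where
  "gf2_subspace H \<longleftrightarrow> {} \<in> H \<and> (\<forall>a\<in>H. \<forall>b\<in>H. symdiff a b \<in> H)"

lemma gf2_subspace_empty: "gf2_subspace H \<Longrightarrow> {} \<in> H"
  and gf2_subspace_symdiff: "gf2_subspace H \<Longrightarrow> a \<in> H \<Longrightarrow> b \<in> H \<Longrightarrow> symdiff a b \<in> H"
  unfolding gf2_subspace_def by auto

lemma gf2_subspace_Int: "gf2_subspace H \<Longrightarrow> gf2_subspace J \<Longrightarrow> gf2_subspace (H \<inter> J)"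
  unfolding gf2_subspace_def by auto

lemma gf2_subspace_pair: "gf2_subspace {{}, x}"
  unfolding gf2_subspace_def by auto

lemma set_plus2I: "u \<in> H \<Longrightarrow> v \<in> J \<Longrightarrow> symdiff u v \<in> set_plus2 H J"
  unfolding set_plus2_def by blast

lemma set_plus2E:
  assumes "x \<in> set_plus2 H J"
  obtains u v where "x = symdiff u v" "u \<in> H" "v \<in> J"
  using assms unfolding set_plus2_def by blast

lemma gf2_subspace_set_plus2:
  assumes H: "gf2_subspace H" and J: "gf2_subspace J"
  shows "gf2_subspace (set_plus2 H J)"
  unfolding gf2_subspace_def
proof (intro conjI ballI)
  show "{} \<in> set_plus2 H J"
    using set_plus2I[OF gf2_subspace_empty[OF H] gf2_subspace_empty[OF J]] by simp
next
  fix a b assume "a \<in> set_plus2 H J" "b \<in> set_plus2 H J"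
  then obtain u v u' v' where uv: "a = symdiff u v" "b = symdiff u' v'" "u \<in> H" "v \<in> J" "u' \<in> H" "v' \<in> J"
    by (metis set_plus2E)
  have "symdiff a b = symdiff (symdiff u u') (symdiff v v')"
    unfolding uv symdiff_def by blast
  then show "symdiff a b \<in> set_plus2 H J"
    using uv set_plus2I gf2_subspace_symdiff H J by metis
qed

lemma set_plus2_subset_left: "gf2_subspace J \<Longrightarrow> H \<subseteq> set_plus2 H J"
  using set_plus2I[of _ H "{}" J] gf2_subspace_empty by fastforce

lemma set_plus2_subset_right: "gf2_subspace H \<Longrightarrow> J \<subseteq> set_plus2 H J"
  using set_plus2I[of "{}" H _ J] gf2_subspace_empty by fastforce

lemma set_plus2_mono: "H \<subseteq> H' \<Longrightarrow> J \<subseteq> J' \<Longrightarrow> set_plus2 H J \<subseteq> set_plus2 H' J'"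
  unfolding set_plus2_def by blast

lemma set_plus2_absorb:
  assumes "gf2_subspace H" "gf2_subspace J" "J \<subseteq> H"
  shows "set_plus2 H J = H"
  using assms set_plus2_subset_left[of J H] gf2_subspace_symdiff[of H]
  unfolding set_plus2_def by blast

lemma set_plus2_assoc: "set_plus2 (set_plus2 A B) C = set_plus2 A (set_plus2 B C)"
  unfolding set_plus2_def by (auto simp: symdiff_assoc) (metis symdiff_assoc)+

lemma set_plus2_commute: "set_plus2 A B = set_plus2 B A"
  unfolding set_plus2_def by (auto simp: symdiff_commute) (metis symdiff_commute)+

lemma set_plus2_subset_Pow: "H \<subseteq> Pow U \<Longrightarrow> J \<subseteq> Pow U \<Longrightarrow> set_plus2 H J \<subseteq> Pow U"
  unfolding set_plus2_def symdiff_def by blast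

lemma set_plus2_eq_image: "set_plus2 H J = (\<lambda>(u, v). symdiff u v) ` (H \<times> J)"
  unfolding set_plus2_def by force

lemma card_symdiff_fiber:
  assumes H: "gf2_subspace H" and J: "gf2_subspace J" and "u0 \<in> H" "v0 \<in> J"
  shows "card {(u, v) \<in> H \<times> J. symdiff u v = symdiff u0 v0} = card (H \<inter> J)"
proof -
  let ?shift = "\<lambda>i. (symdiff u0 i, symdiff v0 i)"
  have "{(u, v) \<in> H \<times> J. symdiff u v = symdiff u0 v0} = ?shift ` (H \<inter> J)"
  proof (intro set_eqI iffI)
    fix x assume "x \<in> {(u, v) \<in> H \<times> J. symdiff u v = symdiff u0 v0}"
    then obtain u v where x: "x = (u, v)" "u \<in> H" "v \<in> J" "symdiff u0 v0 = symdiff u v"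
      by auto
    define i where "i = symdiff u0 u"
    have i': "i = symdiff v0 v"
      unfolding i_def using x(4) by (rule symdiff_swap)
    have u: "u = symdiff u0 i"
      unfolding i_def by simp
    have v: "v = symdiff v0 i"
      unfolding i' by simp
    have "i \<in> H"
      unfolding i_def by (rule gf2_subspace_symdiff[OF H \<open>u0 \<in> H\<close> x(2)])
    moreover have "i \<in> J"
      unfolding i' by (rule gf2_subspace_symdiff[OF J \<open>v0 \<in> J\<close> x(3)])
    ultimately have "i \<in> H \<inter> J" ..
    moreover have "x = ?shift i"
      unfolding x(1) u v ..
    ultimately show "x \<in> ?shift ` (H \<inter> J)"
      by (intro image_eqI)
  next
    fix x assume "x \<in> ?shift ` (H \<inter> J)"
    then obtain i where "i \<in> H" "i \<in> J" "x = ?shift i" by blast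
    then show "x \<in> {(u, v) \<in> H \<times> J. symdiff u v = symdiff u0 v0}"
      using assms by (simp add: gf2_subspace_symdiff symdiff_shift)
  qed
  moreover have "inj_on ?shift (H \<inter> J)"
  proof (rule inj_onI)
    fix i j assume "?shift i = ?shift j"
    then have "symdiff u0 i = symdiff u0 j" by simp
    then show "i = j" by (rule symdiff_left_inject)
  qed
  ultimately show ?thesis
    by (simp add: card_image)
qed

lemma card_set_plus2_mult_card_Int:
  assumes H: "gf2_subspace H" "finite H" and J: "gf2_subspace J" "finite J"
  shows "card (set_plus2 H J) * card (H \<inter> J) = card H * card J"
proof -
  define fiber where "fiber s = {(u, v) \<in> H \<times> J. symdiff u v = s}" for s
  have card_fiber: "card (fiber s) = card (H \<inter> J)" if s_in: "s \<in> set_plus2 H J" for s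
  proof -
    obtain u0 v0 where s: "s = symdiff u0 v0" "u0 \<in> H" "v0 \<in> J"
      using s_in by (rule set_plus2E)
    show ?thesis
      unfolding fiber_def s(1) by (rule card_symdiff_fiber[OF H(1) J(1) s(2,3)])
  qed
  have fin_fiber: "finite (fiber s)" for s
    by (rule finite_subset[OF _ finite_cartesian_product[OF H(2) J(2)]]) (auto simp: fiber_def)
  have "H \<times> J = (\<Union>s\<in>set_plus2 H J. fiber s)"
  proof (intro equalityI subsetI)
    fix x assume "x \<in> H \<times> J"
    then show "x \<in> (\<Union>s\<in>set_plus2 H J. fiber s)"
      unfolding fiber_def by (auto intro: set_plus2I)
  qed (auto simp: fiber_def)
  then have "card H * card J = card (\<Union>s\<in>set_plus2 H J. fiber s)"
    by (simp only: card_cartesian_product[symmetric])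
  also have "\<dots> = (\<Sum>s\<in>set_plus2 H J. card (fiber s))"
    using H(2) J(2) fin_fiber by (intro card_UN_disjoint) (simp_all add: set_plus2_eq_image, auto simp: fiber_def)
  also have "\<dots> = card (set_plus2 H J) * card (H \<inter> J)"
    using card_fiber by simp
  finally show ?thesis ..
qed

text \<open>Adjoining a vector outside \<open>H\<close> doubles its cardinality; repeat until \<open>H = Pow U\<close>.\<close>
lemma card_gf2_subspace_power2:
  assumes U: "finite U"
  shows "gf2_subspace H \<Longrightarrow> H \<subseteq> Pow U \<Longrightarrow> \<exists>m. card H = 2 ^ m"
proof (induction "card (Pow U - H)" arbitrary: H rule: less_induct)
  case less
  show ?case
  proof (cases "H = Pow U")
    case True
    then show ?thesis using U by (auto simp: card_Pow)
  next
    case False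
    then obtain x where x: "x \<subseteq> U" "x \<notin> H" using less.prems by blast
    have fin: "finite H" using less.prems(2) U by (meson finite_Pow_iff finite_subset)
    define H' where "H' = set_plus2 H {{}, x}"
    have H': "gf2_subspace H'" "H' \<subseteq> Pow U"
      unfolding H'_def
      by (rule gf2_subspace_set_plus2[OF less.prems(1) gf2_subspace_pair])
        (rule set_plus2_subset_Pow[OF less.prems(2)], use x in auto)
    have "H \<subseteq> H'" "x \<in> H'"
      unfolding H'_def using set_plus2_subset_left[OF gf2_subspace_pair[of x], of H]
        set_plus2_subset_right[OF less.prems(1), of "{{}, x}"] by auto
    then have "card (Pow U - H') < card (Pow U - H)"
      using U x by (intro psubset_card_mono) auto
    then obtain m where m: "card H' = 2 ^ m"
      using less.hyps[OF _ H'(1) H'(2)] by blast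
    have "x \<noteq> {}" "H \<inter> {{}, x} = {{}}"
      using x gf2_subspace_empty[OF less.prems(1)] by auto
    then have "card H' = 2 * card H"
      using card_set_plus2_mult_card_Int[OF less.prems(1) fin gf2_subspace_pair, of x]
      unfolding H'_def by simp
    with m have "card H = 2 ^ (m - 1)"
      by (cases m) auto
    then show ?thesis ..
  qed
qed

lemma gf2_dim_eq: "card H = 2 ^ m \<Longrightarrow> gf2_dim H = m"
  unfolding gf2_dim_def by simp

lemma gf2_dim_mono: "finite J \<Longrightarrow> H \<subseteq> J \<Longrightarrow> gf2_dim H \<le> gf2_dim J"
  unfolding gf2_dim_def by (intro floor_log_le_iff card_mono)

lemma gf2_dim_set_plus2_Int:
  assumes U: "finite U" and H: "gf2_subspace H" "H \<subseteq> Pow U" and J: "gf2_subspace J" "J \<subseteq> Pow U"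
  shows "gf2_dim (set_plus2 H J) + gf2_dim (H \<inter> J) = gf2_dim H + gf2_dim J"
proof -
  have fin: "finite H" "finite J"
    using U H(2) J(2) by (simp_all add: finite_subset)
  obtain a b c d where
    "card H = 2 ^ a" "card J = 2 ^ b" "card (set_plus2 H J) = 2 ^ c" "card (H \<inter> J) = 2 ^ d"
    using card_gf2_subspace_power2[OF U H] card_gf2_subspace_power2[OF U J]
      card_gf2_subspace_power2[OF U gf2_subspace_set_plus2[OF H(1) J(1)] set_plus2_subset_Pow[OF H(2) J(2)]]
      card_gf2_subspace_power2[OF U gf2_subspace_Int[OF H(1) J(1)]] H(2)
    by (metis le_infI1)
  moreover from this have "(2::nat) ^ (c + d) = 2 ^ (a + b)"
    using card_set_plus2_mult_card_Int[OF H(1) fin(1) J(1) fin(2)] by (simp add: power_add)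
  ultimately show ?thesis
    by (simp add: gf2_dim_eq)
qed

lemma gf2_dim_set_plus2_diff_le:
  assumes U: "finite U" and X: "gf2_subspace X" "X \<subseteq> Pow U" and Y: "gf2_subspace Y" "Y \<subseteq> Pow U"
    and W: "gf2_subspace W" "W \<subseteq> Pow U" and XY: "X \<subseteq> Y"
  shows "int (gf2_dim (set_plus2 Y W)) - int (gf2_dim (set_plus2 X W)) \<le> int (gf2_dim Y) - int (gf2_dim X)"
proof -
  have "finite (Y \<inter> W)"
    using U Y(2) by (meson finite_Int finite_Pow_iff finite_subset)
  then have "gf2_dim (X \<inter> W) \<le> gf2_dim (Y \<inter> W)"
    using XY by (intro gf2_dim_mono) auto
  then show ?thesis
    using gf2_dim_set_plus2_Int[OF U X W] gf2_dim_set_plus2_Int[OF U Y W] by linarith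
qed

lemma gf2_dim_set_plus2_diff_antimono:
  assumes U: "finite U"
    and Z: "gf2_subspace Z" "Z \<subseteq> Pow U" "gf2_subspace Z'" "Z' \<subseteq> Z"
    and B: "gf2_subspace B" "B \<subseteq> Pow U" "gf2_subspace B'" "B' \<subseteq> B"
  shows "int (gf2_dim (set_plus2 Z B)) - int (gf2_dim (set_plus2 Z' B))
    \<le> int (gf2_dim (set_plus2 Z B')) - int (gf2_dim (set_plus2 Z' B'))"
proof -
  have Z'_Pow: "Z' \<subseteq> Pow U" and B'_Pow: "B' \<subseteq> Pow U"
    using Z B by blast+
  have absorb: "set_plus2 B' B = B"
    using set_plus2_absorb[OF B(1,3,4)] by (simp add: set_plus2_commute)
  have "set_plus2 (set_plus2 Z B') B = set_plus2 Z B" "set_plus2 (set_plus2 Z' B') B = set_plus2 Z' B"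
    by (simp_all only: set_plus2_assoc absorb)
  moreover have "int (gf2_dim (set_plus2 (set_plus2 Z B') B)) - int (gf2_dim (set_plus2 (set_plus2 Z' B') B))
      \<le> int (gf2_dim (set_plus2 Z B')) - int (gf2_dim (set_plus2 Z' B'))"
    by (rule gf2_dim_set_plus2_diff_le[OF U
          gf2_subspace_set_plus2[OF Z(3) B(3)] set_plus2_subset_Pow[OF Z'_Pow B'_Pow]
          gf2_subspace_set_plus2[OF Z(1) B(3)] set_plus2_subset_Pow[OF Z(2) B'_Pow]
          B(1,2) set_plus2_mono[OF Z(4) order_refl]])
  ultimately show ?thesis by simp
qed

section \<open>Cycles, boundaries and persistent ranks\<close>

lemma fin_simplicial_complex_finite: "fin_simplicial_complex K \<Longrightarrow> finite K"
  unfolding fin_simplicial_complex_def by blast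

lemma odd_card_symdiff_iff:
  assumes "finite A" "finite B"
  shows "odd (card (symdiff A B)) \<longleftrightarrow> odd (card A) \<noteq> odd (card B)"
proof -
  have "card A + card B = card (A \<union> B) + card (A \<inter> B)"
    using assms by (rule card_Un_Int)
  moreover have "A \<union> B = symdiff A B \<union> (A \<inter> B)"
    unfolding symdiff_def by blast
  moreover have "card (symdiff A B \<union> (A \<inter> B)) = card (symdiff A B) + card (A \<inter> B)"
    using assms by (intro card_Un_disjoint) (auto simp: symdiff_def)
  ultimately have "card A + card B = card (symdiff A B) + 2 * card (A \<inter> B)"
    by simp
  then show ?thesis by presburger
qed

lemma bd_symdiff:
  assumes "finite c" "finite c'"
  shows "bd (symdiff c c') = symdiff (bd c) (bd c')"
proof (rule set_eqI)
  fix t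
  have "{s \<in> symdiff c c'. t \<in> bd_simplex s} = symdiff {s \<in> c. t \<in> bd_simplex s} {s \<in> c'. t \<in> bd_simplex s}"
    unfolding symdiff_def by blast
  then have "odd (card {s \<in> symdiff c c'. t \<in> bd_simplex s}) \<longleftrightarrow>
      odd (card {s \<in> c. t \<in> bd_simplex s}) \<noteq> odd (card {s \<in> c'. t \<in> bd_simplex s})"
    using assms by (simp add: odd_card_symdiff_iff)
  then show "t \<in> bd (symdiff c c') \<longleftrightarrow> t \<in> symdiff (bd c) (bd c')"
    unfolding bd_def symdiff_def by auto
qed

lemma bd_empty [simp]: "bd {} = {}"
  unfolding bd_def by simp

lemma finite_ksimplices: "finite K \<Longrightarrow> finite (ksimplices k K)"
  unfolding ksimplices_def by simp

lemma finite_chain: "finite K \<Longrightarrow> c \<in> chains k K \<Longrightarrow> finite c"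
  unfolding chains_def using finite_subset[of c "ksimplices k K"] finite_ksimplices by blast

lemma gf2_subspace_cycles:
  assumes "finite K"
  shows "gf2_subspace (cycles k K)"
  unfolding gf2_subspace_def
proof (intro conjI ballI)
  show "{} \<in> cycles k K"
    unfolding cycles_def chains_def by simp
next
  fix a b assume "a \<in> cycles k K" "b \<in> cycles k K"
  moreover from this have "finite a" "finite b"
    using assms finite_chain unfolding cycles_def by blast+
  ultimately show "symdiff a b \<in> cycles k K"
    unfolding cycles_def chains_def by (simp add: bd_symdiff symdiff_subset)
qed

lemma gf2_subspace_boundaries:
  assumes "finite K"
  shows "gf2_subspace (boundaries k K)"
  unfolding gf2_subspace_def
proof (intro conjI ballI)
  show "{} \<in> boundaries k K"
    unfolding boundaries_def chains_def by (metis Pow_bottom bd_empty image_eqI)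
next
  fix a b assume "a \<in> boundaries k K" "b \<in> boundaries k K"
  then obtain c c' where c: "a = bd c" "b = bd c'" "c \<in> chains (Suc k) K" "c' \<in> chains (Suc k) K"
    unfolding boundaries_def by blast
  moreover have "finite c" "finite c'"
    using assms c(3,4) by (simp_all add: finite_chain)
  ultimately have "symdiff a b = bd (symdiff c c')"
    by (simp add: bd_symdiff)
  moreover have "symdiff c c' \<in> chains (Suc k) K"
    using c(3,4) unfolding chains_def by (simp add: symdiff_subset)
  ultimately show "symdiff a b \<in> boundaries k K"
    unfolding boundaries_def by blast
qed

lemma cycles_mono: "K' \<subseteq> K \<Longrightarrow> cycles k K' \<subseteq> cycles k K"
  unfolding cycles_def chains_def ksimplices_def by blast

lemma boundaries_mono: "K' \<subseteq> K \<Longrightarrow> boundaries k K' \<subseteq> boundaries k K"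
  unfolding boundaries_def chains_def ksimplices_def by blast

lemma cycles_subset_Pow: "L \<subseteq> K \<Longrightarrow> cycles k L \<subseteq> Pow (ksimplices k K)"
  unfolding cycles_def chains_def ksimplices_def by blast

lemma bd_subset_ksimplices:
  assumes K: "fin_simplicial_complex K" and c: "c \<subseteq> ksimplices (Suc k) K"
  shows "bd c \<subseteq> ksimplices k K"
proof
  fix t assume "t \<in> bd c"
  then have "odd (card {s \<in> c. t \<in> bd_simplex s})"
    unfolding bd_def by simp
  then have "{s \<in> c. t \<in> bd_simplex s} \<noteq> {}"
    by (metis card.empty even_zero)
  then obtain s where s: "s \<in> c" "t \<in> bd_simplex s" by blast
  have sK: "s \<in> K" "card s = Suc (Suc k)"
    using s c unfolding ksimplices_def by auto
  have "finite s"
    using K sK unfolding fin_simplicial_complex_def by blast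
  obtain v where v: "v \<in> s" "t = s - {v}"
    using s(2) sK(2) unfolding bd_simplex_def by auto
  have "card t = Suc k"
    using v \<open>finite s\<close> sK(2) by simp
  moreover have "t \<noteq> {}"
    using \<open>card t = Suc k\<close> by (metis card.empty nat.distinct(1))
  moreover have "t \<subseteq> s"
    using v(2) by blast
  ultimately have "t \<in> K"
    using K sK(1) unfolding fin_simplicial_complex_def by blast
  with \<open>card t = Suc k\<close> show "t \<in> ksimplices k K"
    unfolding ksimplices_def by simp
qed

lemma boundaries_subset_Pow:
  assumes "fin_simplicial_complex K" "L \<subseteq> K"
  shows "boundaries k L \<subseteq> Pow (ksimplices k K)"
proof
  fix b assume "b \<in> boundaries k L"
  then obtain c where "b = bd c" "c \<subseteq> ksimplices (Suc k) L"
    unfolding boundaries_def chains_def by blast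
  moreover from this have "c \<subseteq> ksimplices (Suc k) K"
    using assms(2) unfolding ksimplices_def by blast
  ultimately show "b \<in> Pow (ksimplices k K)"
    using bd_subset_ksimplices[OF assms(1)] by blast
qed

lemma finite_set_plus2_cycles_boundaries:
  assumes K: "fin_simplicial_complex K" and "A \<subseteq> K" "B \<subseteq> K"
  shows "finite (set_plus2 (cycles k A) (boundaries k B))"
proof -
  have "set_plus2 (cycles k A) (boundaries k B) \<subseteq> Pow (ksimplices k K)"
    by (rule set_plus2_subset_Pow[OF cycles_subset_Pow[OF assms(2)] boundaries_subset_Pow[OF K assms(3)]])
  moreover have "finite (Pow (ksimplices k K))"
    using K by (simp add: fin_simplicial_complex_finite finite_ksimplices)
  ultimately show ?thesis
    by (rule finite_subset)
qed

lemma int_pers_rank: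
  assumes K: "fin_simplicial_complex K" and "A \<subseteq> K" "B \<subseteq> K"
  shows "int (pers_rank k A B)
    = int (gf2_dim (set_plus2 (cycles k A) (boundaries k B))) - int (gf2_dim (boundaries k B))"
proof -
  have "finite A"
    using K assms(2) by (meson fin_simplicial_complex_finite finite_subset)
  then have "gf2_dim (boundaries k B) \<le> gf2_dim (set_plus2 (cycles k A) (boundaries k B))"
    by (intro gf2_dim_mono[OF finite_set_plus2_cycles_boundaries[OF assms]]
        set_plus2_subset_right gf2_subspace_cycles)
  then show ?thesis
    unfolding pers_rank_def by simp
qed

lemma pers_rank_empty: "pers_rank k {} L = 0"
proof -
  have "cycles k ({} :: 'a set set) = {{}}"
    unfolding cycles_def chains_def ksimplices_def by auto
  moreover have "set_plus2 {{}} (boundaries k L) = boundaries k L"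
    unfolding set_plus2_def by auto
  ultimately show ?thesis
    unfolding pers_rank_def by simp
qed

lemma pers_rank_mono:
  assumes K: "fin_simplicial_complex K" and "A' \<subseteq> A" "A \<subseteq> K" "B \<subseteq> K"
  shows "pers_rank k A' B \<le> pers_rank k A B"
proof -
  have "gf2_dim (set_plus2 (cycles k A') (boundaries k B)) \<le> gf2_dim (set_plus2 (cycles k A) (boundaries k B))"
    by (rule gf2_dim_mono[OF finite_set_plus2_cycles_boundaries[OF K assms(3,4)]])
      (intro set_plus2_mono cycles_mono assms(2) order_refl)
  then show ?thesis
    unfolding pers_rank_def by simp
qed

lemma pers_rank_inclusion_exclusion_nonneg:
  assumes K: "fin_simplicial_complex K" and A: "A' \<subseteq> A" "A \<subseteq> K" and B: "B' \<subseteq> B" "B \<subseteq> K"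
  shows "0 \<le> int (pers_rank k A B') - int (pers_rank k A' B') - int (pers_rank k A B) + int (pers_rank k A' B)"
proof -
  have fin: "finite K" "finite (ksimplices k K)"
    using K by (simp_all add: fin_simplicial_complex_finite finite_ksimplices)
  have "finite A" "finite A'" "finite B" "finite B'"
    using A B fin(1) by (meson finite_subset)+
  have "int (gf2_dim (set_plus2 (cycles k A) (boundaries k B))) - int (gf2_dim (set_plus2 (cycles k A') (boundaries k B)))
    \<le> int (gf2_dim (set_plus2 (cycles k A) (boundaries k B'))) - int (gf2_dim (set_plus2 (cycles k A') (boundaries k B')))"
    by (rule gf2_dim_set_plus2_diff_antimono[OF fin(2)
          gf2_subspace_cycles[OF \<open>finite A\<close>] cycles_subset_Pow[OF A(2)]
          gf2_subspace_cycles[OF \<open>finite A'\<close>] cycles_mono[OF A(1)]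
          gf2_subspace_boundaries[OF \<open>finite B\<close>] boundaries_subset_Pow[OF K B(2)]
          gf2_subspace_boundaries[OF \<open>finite B'\<close>] boundaries_mono[OF B(1)]])
  moreover have "A' \<subseteq> K" "B' \<subseteq> K"
    using A B by blast+
  ultimately show ?thesis
    using int_pers_rank[OF K] A(2) B(2) by simp
qed

section \<open>Persistence diagrams of sublevel filtrations\<close>

definition sublevel_filt :: "'v set set \<Rightarrow> ('v set \<Rightarrow> real) \<Rightarrow> 'v monofilt" where
  "sublevel_filt K f = (K, \<lambda>\<alpha>. {\<sigma>\<in>K. f \<sigma> \<le> \<alpha>})"

definition sublevel_le :: "'v set set \<Rightarrow> ('v set \<Rightarrow> real) \<Rightarrow> ereal \<Rightarrow> 'v set set" where
  "sublevel_le K f x = {\<sigma>\<in>K. ereal (f \<sigma>) \<le> x}"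

definition sublevel_lt :: "'v set set \<Rightarrow> ('v set \<Rightarrow> real) \<Rightarrow> ereal \<Rightarrow> 'v set set" where
  "sublevel_lt K f x = {\<sigma>\<in>K. ereal (f \<sigma>) < x}"

text \<open>The eventual value of \<open>mult_expr\<close> on \<open>sublevel_filt K f\<close>: for small \<open>\<epsilon>\<close> the sublevel sets at
  \<open>b + \<epsilon>\<close> and \<open>b - \<epsilon>\<close> are \<open>sublevel_le K f b\<close> and \<open>sublevel_lt K f b\<close>.\<close>
definition sublevel_mult :: "nat \<Rightarrow> 'v set set \<Rightarrow> ('v set \<Rightarrow> real) \<Rightarrow> ereal \<Rightarrow> ereal \<Rightarrow> int" where
  "sublevel_mult k K f b d = (if b < d \<and> b \<noteq> -\<infinity> then
     (if d = \<infinity> then int (pers_rank k (sublevel_le K f b) K) - int (pers_rank k (sublevel_lt K f b) K)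
      else int (pers_rank k (sublevel_le K f b) (sublevel_lt K f d))
         - int (pers_rank k (sublevel_lt K f b) (sublevel_lt K f d))
         - int (pers_rank k (sublevel_le K f b) (sublevel_le K f d))
         + int (pers_rank k (sublevel_lt K f b) (sublevel_le K f d)))
     else 0)"

lemma sublevel_le_subset: "sublevel_le K f x \<subseteq> K"
  and sublevel_lt_subset: "sublevel_lt K f x \<subseteq> K"
  and sublevel_lt_subset_le: "sublevel_lt K f x \<subseteq> sublevel_le K f x"
  unfolding sublevel_le_def sublevel_lt_def by auto

lemma sublevel_le_MInf [simp]: "sublevel_le K f (-\<infinity>) = {}"
  and sublevel_le_PInf [simp]: "sublevel_le K f \<infinity> = K"
  unfolding sublevel_le_def by simp_all

lemma sublevel_le_mono: "x \<le> y \<Longrightarrow> sublevel_le K f x \<subseteq> sublevel_le K f y"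
  and sublevel_lt_mono: "x \<le> y \<Longrightarrow> sublevel_lt K f x \<subseteq> sublevel_lt K f y"
  and sublevel_le_subset_lt: "x < y \<Longrightarrow> sublevel_le K f x \<subseteq> sublevel_lt K f y"
  unfolding sublevel_le_def sublevel_lt_def by auto

lemma filt_at_sublevel_filt: "filt_at (sublevel_filt K f) x = sublevel_le K f x"
proof -
  have "(\<Inter>\<alpha>. snd (sublevel_filt K f) \<alpha>) = {}"
  proof (rule equals0I)
    fix s assume "s \<in> (\<Inter>\<alpha>. snd (sublevel_filt K f) \<alpha>)"
    then have "s \<in> snd (sublevel_filt K f) (f s - 1)" by blast
    then show False unfolding sublevel_filt_def by simp
  qed
  moreover have "(\<Union>\<alpha>. snd (sublevel_filt K f) \<alpha>) = K"
    unfolding sublevel_filt_def by auto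
  ultimately show ?thesis
    by (cases x) (simp_all add: filt_at_def sublevel_le_def sublevel_filt_def)
qed

lemma eventually_le_add_iff: "\<forall>\<^sub>F \<epsilon> in at_right 0. (a \<le> r + \<epsilon>) = (a \<le> (r::real))"
proof (cases "a \<le> r")
  case True
  show ?thesis
    using eventually_at_right_real[of 0 1] by (rule eventually_mono) (use True in auto)
next
  case False
  then have "0 < a - r" by simp
  show ?thesis
    using eventually_at_right_real[OF \<open>0 < a - r\<close>] by (rule eventually_mono) (use False in auto)
qed

lemma eventually_le_diff_iff: "\<forall>\<^sub>F \<epsilon> in at_right 0. (a \<le> r - \<epsilon>) = (a < (r::real))"
proof (cases "a < r")
  case True
  then have "0 < r - a" by simp
  show ?thesis
    using eventually_at_right_real[OF \<open>0 < r - a\<close>] by (rule eventually_mono) (use True in auto)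
next
  case False
  show ?thesis
    using eventually_at_right_real[of 0 1] by (rule eventually_mono) (use False in auto)
qed

lemma eventually_sublevel_le_add:
  assumes "finite K"
  shows "\<forall>\<^sub>F \<epsilon> in at_right 0. sublevel_le K f (ereal r + ereal \<epsilon>) = sublevel_le K f (ereal r)"
proof -
  have "\<forall>\<^sub>F \<epsilon> in at_right 0. \<forall>\<sigma>\<in>K. (f \<sigma> \<le> r + \<epsilon>) = (f \<sigma> \<le> r)"
    using assms by (simp add: eventually_ball_finite_distrib eventually_le_add_iff)
  then show ?thesis
    by (rule eventually_mono) (auto simp: sublevel_le_def)
qed

lemma eventually_sublevel_le_diff:
  assumes "finite K"
  shows "\<forall>\<^sub>F \<epsilon> in at_right 0. sublevel_le K f (ereal r - ereal \<epsilon>) = sublevel_lt K f (ereal r)"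
proof -
  have "\<forall>\<^sub>F \<epsilon> in at_right 0. \<forall>\<sigma>\<in>K. (f \<sigma> \<le> r - \<epsilon>) = (f \<sigma> < r)"
    using assms by (simp add: eventually_ball_finite_distrib eventually_le_diff_iff)
  then show ?thesis
    by (rule eventually_mono) (auto simp: sublevel_le_def sublevel_lt_def)
qed

lemma eventually_mult_expr_sublevel_filt:
  assumes "finite K" "b < d"
  shows "\<forall>\<^sub>F \<epsilon> in at_right 0. mult_expr k (sublevel_filt K f) b d \<epsilon> = sublevel_mult k K f b d"
proof (cases b)
  case MInf
  then show ?thesis
    by (simp add: mult_expr_def sublevel_mult_def rk_def filt_at_sublevel_filt pers_rank_empty Let_def)
next
  case PInf
  then show ?thesis using assms(2) by simp
next
  case (real r)
  show ?thesis
  proof (cases d)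
    case MInf
    then show ?thesis using assms(2) by simp
  next
    case PInf
    show ?thesis
      using eventually_sublevel_le_add[OF assms(1), of f r] eventually_sublevel_le_diff[OF assms(1), of f r]
    proof eventually_elim
      case (elim \<epsilon>)
      then show ?case
        using assms(2) real PInf by (simp add: mult_expr_def sublevel_mult_def rk_def filt_at_sublevel_filt)
    qed
  next
    case (real s)
    show ?thesis
      using eventually_sublevel_le_add[OF assms(1), of f r] eventually_sublevel_le_diff[OF assms(1), of f r]
        eventually_sublevel_le_add[OF assms(1), of f s] eventually_sublevel_le_diff[OF assms(1), of f s]
    proof eventually_elim
      case (elim \<epsilon>)
      then show ?case
        using assms(2) \<open>b = ereal r\<close> real
        by (simp add: mult_expr_def sublevel_mult_def rk_def filt_at_sublevel_filt)
    qed
  qed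
qed

lemma multiplicity_pd_sublevel_filt:
  assumes "finite K" "b < d"
  shows "multiplicity_pd k (sublevel_filt K f) b d = nat (sublevel_mult k K f b d)"
proof -
  have "(THE m. \<forall>\<^sub>F \<epsilon> in at_right 0. mult_expr k (sublevel_filt K f) b d \<epsilon> = m) = sublevel_mult k K f b d"
  proof (rule the_equality)
    show "\<forall>\<^sub>F \<epsilon> in at_right 0. mult_expr k (sublevel_filt K f) b d \<epsilon> = sublevel_mult k K f b d"
      using assms by (rule eventually_mult_expr_sublevel_filt)
  next
    fix m assume "\<forall>\<^sub>F \<epsilon> in at_right 0. mult_expr k (sublevel_filt K f) b d \<epsilon> = m"
    then have "\<forall>\<^sub>F \<epsilon> in at_right 0. mult_expr k (sublevel_filt K f) b d \<epsilon> = m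
        \<and> mult_expr k (sublevel_filt K f) b d \<epsilon> = sublevel_mult k K f b d"
      using eventually_mult_expr_sublevel_filt[OF assms] by (rule eventually_conj)
    then obtain \<epsilon> where "mult_expr k (sublevel_filt K f) b d \<epsilon> = m"
        "mult_expr k (sublevel_filt K f) b d \<epsilon> = sublevel_mult k K f b d"
      using eventually_happens'[OF trivial_limit_at_right_real] by blast
    then show "m = sublevel_mult k K f b d"
      by simp
  qed
  then show ?thesis
    unfolding multiplicity_pd_def by simp
qed

lemma sublevel_mult_nonneg:
  assumes "fin_simplicial_complex K"
  shows "0 \<le> sublevel_mult k K f b d"
proof -
  have "0 \<le> int (pers_rank k (sublevel_le K f b) (sublevel_lt K f d))
      - int (pers_rank k (sublevel_lt K f b) (sublevel_lt K f d))
      - int (pers_rank k (sublevel_le K f b) (sublevel_le K f d))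
      + int (pers_rank k (sublevel_lt K f b) (sublevel_le K f d))"
    by (rule pers_rank_inclusion_exclusion_nonneg[OF assms sublevel_lt_subset_le sublevel_le_subset
          sublevel_lt_subset_le sublevel_le_subset])
  moreover have "pers_rank k (sublevel_lt K f b) K \<le> pers_rank k (sublevel_le K f b) K"
    by (rule pers_rank_mono[OF assms sublevel_lt_subset_le sublevel_le_subset order_refl])
  ultimately show ?thesis
    unfolding sublevel_mult_def by simp
qed

lemma sublevel_le_eq_lt: "x \<notin> ereal ` f ` K \<Longrightarrow> sublevel_le K f x = sublevel_lt K f x"
  unfolding sublevel_le_def sublevel_lt_def by (auto simp: order_le_less)

lemma image_sublevel_le_eq_insert:
  "\<sigma> \<in> K \<Longrightarrow> ereal ` f ` sublevel_le K f (ereal (f \<sigma>))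
    = insert (ereal (f \<sigma>)) (ereal ` f ` sublevel_lt K f (ereal (f \<sigma>)))"
  unfolding sublevel_le_def sublevel_lt_def by (auto simp: order_le_less)

lemma value_notin_image_sublevel_lt: "ereal x \<notin> ereal ` f ` sublevel_lt K f (ereal x)"
  unfolding sublevel_lt_def by auto

lemma sublevel_mult_support:
  assumes "sublevel_mult k K f b d \<noteq> 0"
  shows "b \<in> ereal ` f ` K" "d \<in> insert \<infinity> (ereal ` f ` K)"
proof -
  have "b < d" "b \<noteq> -\<infinity>"
    using assms unfolding sublevel_mult_def by (auto split: if_splits)
  show "b \<in> ereal ` f ` K"
  proof (rule ccontr)
    assume "b \<notin> ereal ` f ` K"
    then have "sublevel_mult k K f b d = 0"
      by (simp add: sublevel_mult_def sublevel_le_eq_lt)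
    then show False using assms by simp
  qed
  show "d \<in> insert \<infinity> (ereal ` f ` K)"
  proof (rule ccontr)
    assume d: "d \<notin> insert \<infinity> (ereal ` f ` K)"
    then have "sublevel_mult k K f b d = 0"
      by (simp add: sublevel_mult_def sublevel_le_eq_lt[of d])
    then show False using assms by simp
  qed
qed

lemma count_pdiagram_sublevel_filt:
  assumes "fin_simplicial_complex K"
  shows "count (pdiagram k (sublevel_filt K f)) (b, d) = (if b < d then nat (sublevel_mult k K f b d) else 0)"
proof -
  let ?mult = "\<lambda>(b, d). if b < d then multiplicity_pd k (sublevel_filt K f) b d else 0"
  have fin: "finite K"
    using assms by (rule fin_simplicial_complex_finite)
  have mult: "?mult = (\<lambda>(b, d). if b < d then nat (sublevel_mult k K f b d) else 0)"
    using multiplicity_pd_sublevel_filt[OF fin] by (auto simp: fun_eq_iff)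
  have "{x. 0 < ?mult x} \<subseteq> ereal ` f ` K \<times> insert \<infinity> (ereal ` f ` K)"
  proof
    fix x assume x: "x \<in> {x. 0 < ?mult x}"
    obtain b d where bd: "x = (b, d)"
      by (cases x)
    have "sublevel_mult k K f b d \<noteq> 0"
      using x unfolding mult bd by (simp split: if_splits)
    then show "x \<in> ereal ` f ` K \<times> insert \<infinity> (ereal ` f ` K)"
      unfolding bd using sublevel_mult_support[of k K f b d] by simp
  qed
  then have "finite {x. 0 < ?mult x}"
    by (rule finite_subset) (use fin in simp)
  then have "count (pdiagram k (sublevel_filt K f)) = ?mult"
    unfolding pdiagram_def by (rule count_Abs_multiset)
  then show ?thesis
    unfolding mult by simp
qed

section \<open>Persistent ranks as sums of multiplicities\<close>

definition f_downset :: "'v set set \<Rightarrow> ('v set \<Rightarrow> real) \<Rightarrow> 'v set set \<Rightarrow> bool" where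
  "f_downset K f S \<longleftrightarrow> S \<subseteq> K \<and> (\<forall>\<sigma>\<in>S. \<forall>\<tau>\<in>K. f \<tau> \<le> f \<sigma> \<longrightarrow> \<tau> \<in> S)"

lemma f_downset_subset: "f_downset K f S \<Longrightarrow> S \<subseteq> K"
  unfolding f_downset_def by blast

lemma f_downset_sublevel_le: "f_downset K f (sublevel_le K f x)"
  unfolding f_downset_def sublevel_le_def by auto (metis ereal_less_eq(3) order_trans)

lemma f_downset_sublevel_lt: "f_downset K f (sublevel_lt K f x)"
  unfolding f_downset_def sublevel_lt_def by auto (metis ereal_less_eq(3) le_less_trans)

lemma f_downset_K: "f_downset K f K"
  unfolding f_downset_def by blast

lemma f_downset_eq_sublevel_lt:
  assumes "finite K" "f_downset K f T" "T \<noteq> K"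
  obtains t where "t \<in> K" "t \<notin> T" "T = sublevel_lt K f (ereal (f t))"
proof -
  have TK: "T \<subseteq> K"
    using assms(2) by (rule f_downset_subset)
  have fin: "finite (f ` (K - T))"
    using assms(1) by simp
  have "f ` (K - T) \<noteq> {}"
    using TK assms(3) by blast
  then have "Min (f ` (K - T)) \<in> f ` (K - T)"
    using fin by (rule Min_in[rotated])
  then obtain t where t: "t \<in> K" "t \<notin> T" "f t = Min (f ` (K - T))"
    by auto
  have t_min: "f t \<le> f s" if "s \<in> K" "s \<notin> T" for s
    unfolding t(3) using fin that by (intro Min_le) auto
  have "T = sublevel_lt K f (ereal (f t))"
  proof (intro set_eqI iffI)
    fix s assume "s \<in> T"
    then have "\<not> f t \<le> f s"
      using assms(2) t(1,2) unfolding f_downset_def by blast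
    then show "s \<in> sublevel_lt K f (ereal (f t))"
      using \<open>s \<in> T\<close> TK unfolding sublevel_lt_def by auto
  next
    fix s assume "s \<in> sublevel_lt K f (ereal (f t))"
    then have "s \<in> K" "f s < f t"
      unfolding sublevel_lt_def by auto
    then show "s \<in> T"
      using t_min by fastforce
  qed
  with t(1,2) show ?thesis
    by (rule that)
qed

lemma f_downset_eq_sublevel_le:
  assumes "finite K" "f_downset K f S" "S \<noteq> {}"
  obtains s where "s \<in> S" "S = sublevel_le K f (ereal (f s))"
proof -
  have SK: "S \<subseteq> K"
    using assms(2) by (rule f_downset_subset)
  have fin: "finite (f ` S)"
    using assms(1) SK by (simp add: finite_subset)
  have "Max (f ` S) \<in> f ` S"
    using fin assms(3) by (intro Max_in) auto
  then obtain s where s: "s \<in> S" "f s = Max (f ` S)"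
    by auto
  have "S = sublevel_le K f (ereal (f s))"
  proof (intro set_eqI iffI)
    fix s' assume "s' \<in> S"
    then have "f s' \<le> f s"
      unfolding s(2) using fin by (intro Max_ge) auto
    then show "s' \<in> sublevel_le K f (ereal (f s))"
      using \<open>s' \<in> S\<close> SK unfolding sublevel_le_def by auto
  next
    fix s' assume "s' \<in> sublevel_le K f (ereal (f s))"
    then have "s' \<in> K" "f s' \<le> f s"
      unfolding sublevel_le_def by auto
    then show "s' \<in> S"
      using assms(2) s(1) unfolding f_downset_def by blast
  qed
  with s(1) show ?thesis
    by (rule that)
qed

lemma pers_rank_sublevel_diff_eq_sum:
  assumes K: "fin_simplicial_complex K"
  shows "f_downset K f T \<Longrightarrow> sublevel_le K f (ereal r) \<subseteq> T \<Longrightarrow>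
    int (pers_rank k (sublevel_le K f (ereal r)) T) - int (pers_rank k (sublevel_lt K f (ereal r)) T)
    = (\<Sum>e \<in> insert \<infinity> (ereal ` f ` K) - ereal ` f ` T. sublevel_mult k K f (ereal r) e)"
proof (induction "card (K - T)" arbitrary: T rule: less_induct)
  case less
  have fin: "finite K"
    using K by (rule fin_simplicial_complex_finite)
  show ?case
  proof (cases "T = K")
    case True
    have "insert \<infinity> (ereal ` f ` K) - ereal ` f ` K = {\<infinity>}"
      by auto
    then show ?thesis
      unfolding True by (simp add: sublevel_mult_def)
  next
    case False
    obtain t where t: "t \<in> K" "t \<notin> T" and T: "T = sublevel_lt K f (ereal (f t))"
      using f_downset_eq_sublevel_lt[OF fin less.prems(1) False] .
    define T' where "T' = sublevel_le K f (ereal (f t))"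
    have "r < f t"
      using t less.prems(2) unfolding sublevel_le_def by force
    have "T \<subseteq> T'"
      unfolding T T'_def by (rule sublevel_lt_subset_le)
    moreover have "t \<in> T'"
      unfolding T'_def sublevel_le_def using t(1) by simp
    ultimately have "card (K - T') < card (K - T)"
      using fin t by (intro psubset_card_mono) auto
    moreover have "sublevel_le K f (ereal r) \<subseteq> T'"
      using less.prems(2) \<open>T \<subseteq> T'\<close> by (rule order_trans)
    ultimately have IH:
      "int (pers_rank k (sublevel_le K f (ereal r)) T') - int (pers_rank k (sublevel_lt K f (ereal r)) T')
        = (\<Sum>e \<in> insert \<infinity> (ereal ` f ` K) - ereal ` f ` T'. sublevel_mult k K f (ereal r) e)"
      using less.hyps[OF _ f_downset_sublevel_le] unfolding T'_def by blast
    have values_T': "ereal ` f ` T' = insert (ereal (f t)) (ereal ` f ` T)"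
      unfolding T'_def T using t(1) by (rule image_sublevel_le_eq_insert)
    then have nonvalues_T: "insert \<infinity> (ereal ` f ` K) - ereal ` f ` T
        = insert (ereal (f t)) (insert \<infinity> (ereal ` f ` K) - ereal ` f ` T')"
      using t(1) value_notin_image_sublevel_lt[of "f t" f K] unfolding T by auto
    have "sublevel_mult k K f (ereal r) (ereal (f t))
        = int (pers_rank k (sublevel_le K f (ereal r)) T) - int (pers_rank k (sublevel_lt K f (ereal r)) T)
          - (int (pers_rank k (sublevel_le K f (ereal r)) T') - int (pers_rank k (sublevel_lt K f (ereal r)) T'))"
      unfolding sublevel_mult_def T T'_def using \<open>r < f t\<close> by simp
    then show ?thesis
      unfolding nonvalues_T using IH fin values_T' by (simp add: sum.insert)
  qed
qed

lemma pers_rank_f_downset_eq_sum: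
  assumes K: "fin_simplicial_complex K" and T: "f_downset K f T"
  shows "f_downset K f S \<Longrightarrow> S \<subseteq> T \<Longrightarrow> int (pers_rank k S T)
    = (\<Sum>v \<in> ereal ` f ` S. \<Sum>e \<in> insert \<infinity> (ereal ` f ` K) - ereal ` f ` T. sublevel_mult k K f v e)"
proof (induction "card S" arbitrary: S rule: less_induct)
  case less
  have fin: "finite K"
    using K by (rule fin_simplicial_complex_finite)
  have finS: "finite S"
    using less.prems(1) f_downset_subset fin by (metis finite_subset)
  show ?case
  proof (cases "S = {}")
    case True
    then show ?thesis by (simp add: pers_rank_empty)
  next
    case False
    obtain s where s: "s \<in> S" and S: "S = sublevel_le K f (ereal (f s))"
      using f_downset_eq_sublevel_le[OF fin less.prems(1) False] .
    define S' where "S' = sublevel_lt K f (ereal (f s))"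
    have "S' \<subseteq> S"
      unfolding S S'_def by (rule sublevel_lt_subset_le)
    moreover have "s \<notin> S'"
      unfolding S'_def sublevel_lt_def by simp
    ultimately have "card S' < card S"
      using s finS by (intro psubset_card_mono) auto
    then have IH: "int (pers_rank k S' T)
        = (\<Sum>v \<in> ereal ` f ` S'. \<Sum>e \<in> insert \<infinity> (ereal ` f ` K) - ereal ` f ` T. sublevel_mult k K f v e)"
      using less.hyps[OF _ f_downset_sublevel_lt] \<open>S' \<subseteq> S\<close> less.prems(2) unfolding S'_def by blast
    have diff: "int (pers_rank k S T) - int (pers_rank k S' T)
        = (\<Sum>e \<in> insert \<infinity> (ereal ` f ` K) - ereal ` f ` T. sublevel_mult k K f (ereal (f s)) e)"
      unfolding S S'_def using T less.prems(2) S by (intro pers_rank_sublevel_diff_eq_sum[OF K]) auto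
    have "s \<in> K"
      using s f_downset_subset[OF less.prems(1)] by blast
    then have "ereal ` f ` S = insert (ereal (f s)) (ereal ` f ` S')"
      unfolding S'_def by (subst S) (rule image_sublevel_le_eq_insert)
    moreover have "ereal (f s) \<notin> ereal ` f ` S'"
      unfolding S'_def by (rule value_notin_image_sublevel_lt)
    moreover have "finite (ereal ` f ` S')"
      using \<open>S' \<subseteq> S\<close> finS by (simp add: finite_subset)
    ultimately show ?thesis
      using IH diff by simp
  qed
qed

lemma pers_rank_f_downset_eq_sum_indicator:
  assumes K: "fin_simplicial_complex K" and T: "f_downset K f T" and S: "f_downset K f S" "S \<subseteq> T"
    and P: "\<And>v. v \<in> ereal ` f ` K \<Longrightarrow> v \<in> ereal ` f ` S \<longleftrightarrow> P v"
    and Q: "\<And>e. e \<in> insert \<infinity> (ereal ` f ` K) \<Longrightarrow> e \<notin> ereal ` f ` T \<longleftrightarrow> Q e"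
  shows "int (pers_rank k S T) = (\<Sum>v \<in> ereal ` f ` K. \<Sum>e \<in> insert \<infinity> (ereal ` f ` K).
      sublevel_mult k K f v e * (of_bool (P v) * of_bool (Q e)))"
proof -
  have fin: "finite (ereal ` f ` K)" "finite (insert \<infinity> (ereal ` f ` K))"
    using K by (simp_all add: fin_simplicial_complex_finite)
  have "ereal ` f ` S = {v \<in> ereal ` f ` K. P v}"
    using P f_downset_subset[OF S(1)] by blast
  moreover have "insert \<infinity> (ereal ` f ` K) - ereal ` f ` T = {e \<in> insert \<infinity> (ereal ` f ` K). Q e}"
    using Q by blast
  ultimately have "int (pers_rank k S T) = (\<Sum>v \<in> {v \<in> ereal ` f ` K. P v}.
      \<Sum>e \<in> {e \<in> insert \<infinity> (ereal ` f ` K). Q e}. sublevel_mult k K f v e)"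
    using pers_rank_f_downset_eq_sum[OF K T S] by simp
  also have "\<dots> = (\<Sum>v \<in> ereal ` f ` K. if P v then
      (\<Sum>e \<in> insert \<infinity> (ereal ` f ` K). if Q e then sublevel_mult k K f v e else 0) else 0)"
    unfolding sum.inter_filter[OF fin(1)] sum.inter_filter[OF fin(2)] ..
  also have "\<dots> = (\<Sum>v \<in> ereal ` f ` K. \<Sum>e \<in> insert \<infinity> (ereal ` f ` K).
      sublevel_mult k K f v e * (of_bool (P v) * of_bool (Q e)))"
    by (intro sum.cong refl) (auto intro: sum.cong)
  finally show ?thesis .
qed

section \<open>Relabelling along order-compatible functions\<close>

definition order_compatible :: "'v set set \<Rightarrow> ('v set \<Rightarrow> real) \<Rightarrow> ('v set \<Rightarrow> real) \<Rightarrow> bool" where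
  "order_compatible K f g \<longleftrightarrow> (\<forall>s\<in>K. \<forall>t\<in>K. f s \<le> f t \<longrightarrow> g s \<le> g t)"

text \<open>Sends the value \<open>f \<sigma>\<close> to \<open>g \<sigma>\<close>; this does not depend on the simplex chosen by \<open>SOME\<close> when
  \<open>f\<close> and \<open>g\<close> are order-compatible (\<open>relabel_eq\<close>).\<close>
definition relabel :: "'v set set \<Rightarrow> ('v set \<Rightarrow> real) \<Rightarrow> ('v set \<Rightarrow> real) \<Rightarrow> ereal \<Rightarrow> ereal" where
  "relabel K f g x = (if x = \<infinity> then \<infinity> else ereal (g (SOME s. s \<in> K \<and> ereal (f s) = x)))"

lemma relabel_PInf [simp]: "relabel K f g \<infinity> = \<infinity>"
  unfolding relabel_def by simp

lemma relabel_eq: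
  assumes c: "order_compatible K f g" and s: "s \<in> K"
  shows "relabel K f g (ereal (f s)) = ereal (g s)"
proof -
  define t where "t = (SOME t. t \<in> K \<and> ereal (f t) = ereal (f s))"
  have "t \<in> K" "f t = f s"
    using someI_ex[of "\<lambda>t. t \<in> K \<and> ereal (f t) = ereal (f s)"] s unfolding t_def by auto
  then have "g t = g s"
    using c s unfolding order_compatible_def by (metis order_antisym order_refl)
  then show ?thesis
    unfolding relabel_def t_def[symmetric] by simp
qed

lemma f_downset_sublevel_le_compatible: "order_compatible K f g \<Longrightarrow> f_downset K f (sublevel_le K g w)"
  unfolding f_downset_def sublevel_le_def order_compatible_def
  by auto (metis ereal_less_eq(3) order_trans)

lemma f_downset_sublevel_lt_compatible: "order_compatible K f g \<Longrightarrow> f_downset K f (sublevel_lt K g w)"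
  unfolding f_downset_def sublevel_lt_def order_compatible_def
  by auto (metis ereal_less_eq(3) le_less_trans)

lemma image_sublevel_le_relabel_iff:
  assumes c: "order_compatible K f g" and x: "x \<in> insert \<infinity> (ereal ` f ` K)" and w: "w \<noteq> \<infinity>"
  shows "x \<in> ereal ` f ` sublevel_le K g w \<longleftrightarrow> relabel K f g x \<le> w"
proof (cases "x = \<infinity>")
  case True
  then show ?thesis using w by auto
next
  case False
  then obtain s where s: "s \<in> K" "x = ereal (f s)"
    using x by auto
  have "x \<in> ereal ` f ` sublevel_le K g w \<longleftrightarrow> ereal (g s) \<le> w"
  proof
    assume "x \<in> ereal ` f ` sublevel_le K g w"
    then obtain t where t: "t \<in> K" "ereal (g t) \<le> w" "f t = f s"
      using s unfolding sublevel_le_def by auto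
    then have "g s \<le> g t"
      using c s unfolding order_compatible_def by simp
    then show "ereal (g s) \<le> w"
      using t(2) by (metis ereal_less_eq(3) order_trans)
  next
    assume "ereal (g s) \<le> w"
    then show "x \<in> ereal ` f ` sublevel_le K g w"
      unfolding sublevel_le_def using s by auto
  qed
  then show ?thesis
    using relabel_eq[OF c s(1)] s by simp
qed

lemma image_sublevel_lt_relabel_iff:
  assumes c: "order_compatible K f g" and x: "x \<in> insert \<infinity> (ereal ` f ` K)"
  shows "x \<in> ereal ` f ` sublevel_lt K g w \<longleftrightarrow> relabel K f g x < w"
proof (cases "x = \<infinity>")
  case True
  then show ?thesis by auto
next
  case False
  then obtain s where s: "s \<in> K" "x = ereal (f s)"
    using x by auto
  have "x \<in> ereal ` f ` sublevel_lt K g w \<longleftrightarrow> ereal (g s) < w"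
  proof
    assume "x \<in> ereal ` f ` sublevel_lt K g w"
    then obtain t where t: "t \<in> K" "ereal (g t) < w" "f t = f s"
      using s unfolding sublevel_lt_def by auto
    then have "g s \<le> g t"
      using c s unfolding order_compatible_def by simp
    then show "ereal (g s) < w"
      using t(2) by (metis ereal_less_eq(3) le_less_trans)
  next
    assume "ereal (g s) < w"
    then show "x \<in> ereal ` f ` sublevel_lt K g w"
      unfolding sublevel_lt_def using s by auto
  qed
  then show ?thesis
    using relabel_eq[OF c s(1)] s by simp
qed

lemma of_bool_le_diff_less:
  "(of_bool (x \<le> b) * of_bool Q - of_bool (x < b) * of_bool Q :: int) = of_bool (x = b \<and> Q)"
  for x b :: "'a::linorder"
  by (cases x b rule: linorder_cases) auto

lemma of_bool_inclusion_exclusion: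
  "(of_bool (x \<le> b) * of_bool (\<not> y < d) - of_bool (x < b) * of_bool (\<not> y < d)
    - of_bool (x \<le> b) * of_bool (\<not> y \<le> d) + of_bool (x < b) * of_bool (\<not> y \<le> d) :: int)
   = of_bool (x = b \<and> y = d)"
  for x b y d :: "'a::linorder"
  by (cases x b rule: linorder_cases; cases y d rule: linorder_cases) auto

lemma double_sum_mult_diff:
  "(\<Sum>v\<in>A. \<Sum>e\<in>B. (m v e :: int) * c1 v e) - (\<Sum>v\<in>A. \<Sum>e\<in>B. m v e * c2 v e)
    = (\<Sum>v\<in>A. \<Sum>e\<in>B. m v e * (c1 v e - c2 v e))"
  by (simp add: sum_subtractf right_diff_distrib)

lemma double_sum_mult_add:
  "(\<Sum>v\<in>A. \<Sum>e\<in>B. (m v e :: int) * c1 v e) + (\<Sum>v\<in>A. \<Sum>e\<in>B. m v e * c2 v e)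
    = (\<Sum>v\<in>A. \<Sum>e\<in>B. m v e * (c1 v e + c2 v e))"
  by (simp add: sum.distrib distrib_left)

lemma sublevel_mult_relabel_PInf:
  assumes K: "fin_simplicial_complex K" and c: "order_compatible K f g"
  shows "sublevel_mult k K g (ereal r) \<infinity> = (\<Sum>v \<in> ereal ` f ` K. \<Sum>e \<in> insert \<infinity> (ereal ` f ` K).
      sublevel_mult k K f v e * of_bool (relabel K f g v = ereal r \<and> relabel K f g e = \<infinity>))"
proof -
  let ?L = "relabel K f g"
  have le: "v \<in> ereal ` f ` sublevel_le K g (ereal r) \<longleftrightarrow> ?L v \<le> ereal r"
    and lt: "v \<in> ereal ` f ` sublevel_lt K g (ereal r) \<longleftrightarrow> ?L v < ereal r"
    if "v \<in> ereal ` f ` K" for v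
    using that image_sublevel_le_relabel_iff[OF c] image_sublevel_lt_relabel_iff[OF c] by simp_all
  have top: "e \<notin> ereal ` f ` K \<longleftrightarrow> ?L e = \<infinity>" if "e \<in> insert \<infinity> (ereal ` f ` K)" for e
    using that relabel_eq[OF c] by auto
  have "int (pers_rank k (sublevel_le K g (ereal r)) K) = (\<Sum>v \<in> ereal ` f ` K. \<Sum>e \<in> insert \<infinity> (ereal ` f ` K).
      sublevel_mult k K f v e * (of_bool (?L v \<le> ereal r) * of_bool (?L e = \<infinity>)))"
    by (rule pers_rank_f_downset_eq_sum_indicator[OF K f_downset_K f_downset_sublevel_le_compatible[OF c]
          sublevel_le_subset le top])
  moreover have "int (pers_rank k (sublevel_lt K g (ereal r)) K) = (\<Sum>v \<in> ereal ` f ` K. \<Sum>e \<in> insert \<infinity> (ereal ` f ` K).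
      sublevel_mult k K f v e * (of_bool (?L v < ereal r) * of_bool (?L e = \<infinity>)))"
    by (rule pers_rank_f_downset_eq_sum_indicator[OF K f_downset_K f_downset_sublevel_lt_compatible[OF c]
          sublevel_lt_subset lt top])
  ultimately show ?thesis
    unfolding sublevel_mult_def by (simp add: double_sum_mult_diff of_bool_le_diff_less)
qed

lemma sublevel_mult_relabel_real:
  assumes K: "fin_simplicial_complex K" and c: "order_compatible K f g"
    and bd: "ereal r < d" "d \<noteq> \<infinity>"
  shows "sublevel_mult k K g (ereal r) d = (\<Sum>v \<in> ereal ` f ` K. \<Sum>e \<in> insert \<infinity> (ereal ` f ` K).
      sublevel_mult k K f v e * of_bool (relabel K f g v = ereal r \<and> relabel K f g e = d))"
proof -
  let ?L = "relabel K f g" and ?rank = "\<lambda>S T. int (pers_rank k S T)"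
  let ?sum = "\<lambda>P Q. \<Sum>v \<in> ereal ` f ` K. \<Sum>e \<in> insert \<infinity> (ereal ` f ` K).
      sublevel_mult k K f v e * (of_bool (P (?L v)) * of_bool (Q (?L e)))"
  have le_r: "v \<in> ereal ` f ` sublevel_le K g (ereal r) \<longleftrightarrow> ?L v \<le> ereal r"
    and lt_r: "v \<in> ereal ` f ` sublevel_lt K g (ereal r) \<longleftrightarrow> ?L v < ereal r"
    if "v \<in> ereal ` f ` K" for v
    using that image_sublevel_le_relabel_iff[OF c] image_sublevel_lt_relabel_iff[OF c] by simp_all
  have le_d: "e \<notin> ereal ` f ` sublevel_le K g d \<longleftrightarrow> \<not> ?L e \<le> d"
    and lt_d: "e \<notin> ereal ` f ` sublevel_lt K g d \<longleftrightarrow> \<not> ?L e < d"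
    if "e \<in> insert \<infinity> (ereal ` f ` K)" for e
    using that image_sublevel_le_relabel_iff[OF c _ bd(2)] image_sublevel_lt_relabel_iff[OF c] by simp_all
  note le = f_downset_sublevel_le_compatible[OF c] and lt = f_downset_sublevel_lt_compatible[OF c]
  have rd: "ereal r \<le> d"
    using bd(1) by simp
  have "?rank (sublevel_le K g (ereal r)) (sublevel_lt K g d) = ?sum (\<lambda>x. x \<le> ereal r) (\<lambda>y. \<not> y < d)"
    by (rule pers_rank_f_downset_eq_sum_indicator[OF K lt le sublevel_le_subset_lt[OF bd(1)] le_r lt_d])
  moreover have "?rank (sublevel_lt K g (ereal r)) (sublevel_lt K g d) = ?sum (\<lambda>x. x < ereal r) (\<lambda>y. \<not> y < d)"
    by (rule pers_rank_f_downset_eq_sum_indicator[OF K lt lt sublevel_lt_mono[OF rd] lt_r lt_d])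
  moreover have "?rank (sublevel_le K g (ereal r)) (sublevel_le K g d) = ?sum (\<lambda>x. x \<le> ereal r) (\<lambda>y. \<not> y \<le> d)"
    by (rule pers_rank_f_downset_eq_sum_indicator[OF K le le sublevel_le_mono[OF rd] le_r le_d])
  moreover have "?rank (sublevel_lt K g (ereal r)) (sublevel_le K g d) = ?sum (\<lambda>x. x < ereal r) (\<lambda>y. \<not> y \<le> d)"
    by (rule pers_rank_f_downset_eq_sum_indicator[OF K le lt
          order_trans[OF sublevel_lt_subset_le sublevel_le_mono[OF rd]] lt_r le_d])
  ultimately show ?thesis
    unfolding sublevel_mult_def using bd
    by (simp add: double_sum_mult_diff double_sum_mult_add of_bool_inclusion_exclusion)
qed

lemma sublevel_mult_relabel:
  assumes K: "fin_simplicial_complex K" and c: "order_compatible K f g" and bd: "b < d"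
  shows "sublevel_mult k K g b d = (\<Sum>v \<in> ereal ` f ` K. \<Sum>e \<in> insert \<infinity> (ereal ` f ` K).
      sublevel_mult k K f v e * of_bool (relabel K f g v = b \<and> relabel K f g e = d))"
proof (cases b)
  case (real r)
  then show ?thesis
    using sublevel_mult_relabel_PInf[OF K c] sublevel_mult_relabel_real[OF K c] bd
    by (cases "d = \<infinity>") simp_all
next
  case PInf
  then show ?thesis using bd by simp
next
  case MInf
  have "relabel K f g v \<noteq> -\<infinity>" if "v \<in> ereal ` f ` K" for v
    using relabel_eq[OF c] that by auto
  then show ?thesis
    using MInf by (simp add: sublevel_mult_def)
qed

lemma nat_sum:
  assumes "\<And>x. x \<in> A \<Longrightarrow> 0 \<le> f x"
  shows "nat (sum f A) = (\<Sum>x\<in>A. nat (f x))"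
proof -
  have "sum f A = (\<Sum>x\<in>A. int (nat (f x)))"
    using assms by (intro sum.cong) auto
  then show ?thesis
    by (metis nat_int of_nat_sum)
qed

lemma relabel_less_imp_less:
  assumes c: "order_compatible K f g"
    and v: "v \<in> insert \<infinity> (ereal ` f ` K)" and e: "e \<in> insert \<infinity> (ereal ` f ` K)"
    and less: "relabel K f g v < relabel K f g e"
  shows "v < e"
proof (rule ccontr)
  assume "\<not> v < e"
  then have "e \<le> v" by simp
  show False
  proof (cases "v = \<infinity>")
    case True
    then show False using less by simp
  next
    case False
    then obtain s where s: "s \<in> K" "v = ereal (f s)"
      using v by auto
    moreover from this obtain t where t: "t \<in> K" "e = ereal (f t)"
      using e \<open>e \<le> v\<close> by auto
    ultimately have "g t \<le> g s"
      using c \<open>e \<le> v\<close> unfolding order_compatible_def by simp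
    then show False
      using less s t relabel_eq[OF c] by simp
  qed
qed

lemma set_mset_pdiagram_sublevel_filt:
  assumes K: "fin_simplicial_complex K" and x: "x \<in># pdiagram k (sublevel_filt K f)"
  shows "fst x < snd x" "x \<in> ereal ` f ` K \<times> insert \<infinity> (ereal ` f ` K)"
proof -
  obtain b d where bd: "x = (b, d)" by (cases x)
  have "0 < count (pdiagram k (sublevel_filt K f)) (b, d)"
    using x unfolding bd by simp
  then have "b < d" "sublevel_mult k K f b d \<noteq> 0"
    unfolding count_pdiagram_sublevel_filt[OF K] by (simp_all split: if_splits)
  then show "fst x < snd x" "x \<in> ereal ` f ` K \<times> insert \<infinity> (ereal ` f ` K)"
    unfolding bd using sublevel_mult_support[of k K f b d] by simp_all
qed

lemma count_image_mset_map_prod_eq_sum: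
  assumes "finite A" "finite B" "set_mset M \<subseteq> A \<times> B"
  shows "count (image_mset (map_prod h h') M) (b, d)
    = (\<Sum>v\<in>A. \<Sum>e\<in>B. if (h v, h' e) = (b, d) then count M (v, e) else 0)"
proof -
  have "count (image_mset (map_prod h h') M) (b, d) = (\<Sum>x \<in> map_prod h h' -` {(b, d)} \<inter> set_mset M. count M x)"
    by (rule count_image_mset)
  also have "\<dots> = (\<Sum>x \<in> {x \<in> A \<times> B. map_prod h h' x = (b, d)}. count M x)"
    using assms by (intro sum.mono_neutral_left) (auto simp: not_in_iff)
  also have "\<dots> = (\<Sum>x \<in> A \<times> B. if map_prod h h' x = (b, d) then count M x else 0)"
    using assms(1,2) by (simp add: sum.inter_filter)
  also have "\<dots> = (\<Sum>v\<in>A. \<Sum>e\<in>B. if (h v, h' e) = (b, d) then count M (v, e) else 0)"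
    unfolding sum.cartesian_product by (rule sum.cong) auto
  finally show ?thesis .
qed

lemma pdiagram_sublevel_filt_relabel:
  assumes K: "fin_simplicial_complex K" and c: "order_compatible K f g"
  defines "L \<equiv> relabel K f g"
  shows "pdiagram k (sublevel_filt K g)
    = image_mset (map_prod L L) (filter_mset (\<lambda>(b, d). L b < L d) (pdiagram k (sublevel_filt K f)))"
    (is "?B = image_mset ?h ?A'")
proof (rule multiset_eqI)
  fix y :: "ereal \<times> ereal"
  obtain b d where y: "y = (b, d)" by (cases y)
  let ?V = "ereal ` f ` K" and ?Vi = "insert \<infinity> (ereal ` f ` K)"
  have fin: "finite ?V" "finite ?Vi"
    using K by (simp_all add: fin_simplicial_complex_finite)
  have "set_mset ?A' \<subseteq> ?V \<times> ?Vi"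
    using set_mset_pdiagram_sublevel_filt(2)[OF K] by auto
  then have "count (image_mset ?h ?A') y = (\<Sum>v \<in> ?V. \<Sum>e \<in> ?Vi. if (L v, L e) = (b, d) then count ?A' (v, e) else 0)"
    unfolding y by (rule count_image_mset_map_prod_eq_sum[OF fin])
  also have "\<dots> = (\<Sum>v \<in> ?V. \<Sum>e \<in> ?Vi. if b < d then nat (sublevel_mult k K f v e * of_bool (L v = b \<and> L e = d)) else 0)"
  proof (intro sum.cong refl)
    fix v e assume "v \<in> ?V" "e \<in> ?Vi"
    then have "L v < L e \<Longrightarrow> v < e"
      unfolding L_def using relabel_less_imp_less[OF c] by blast
    then show "(if (L v, L e) = (b, d) then count ?A' (v, e) else 0)
        = (if b < d then nat (sublevel_mult k K f v e * of_bool (L v = b \<and> L e = d)) else 0)"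
      by (auto simp: count_pdiagram_sublevel_filt[OF K])
  qed
  also have "\<dots> = count ?B y"
  proof (cases "b < d")
    case True
    have "(\<Sum>v \<in> ?V. \<Sum>e \<in> ?Vi. nat (sublevel_mult k K f v e * of_bool (L v = b \<and> L e = d)))
        = nat (\<Sum>v \<in> ?V. \<Sum>e \<in> ?Vi. sublevel_mult k K f v e * of_bool (L v = b \<and> L e = d))"
      using sublevel_mult_nonneg[OF K] by (simp add: nat_sum sum_nonneg)
    then show ?thesis
      using True unfolding y count_pdiagram_sublevel_filt[OF K] sublevel_mult_relabel[OF K c True] L_def
      by simp
  next
    case False
    then show ?thesis
      unfolding y count_pdiagram_sublevel_filt[OF K] by simp
  qed
  finally show "count ?B y = count (image_mset ?h ?A') y" ..
qed

lemma edist_relabel_le: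
  assumes c: "order_compatible K f g" and close: "\<And>s. s \<in> K \<Longrightarrow> \<bar>f s - g s\<bar> \<le> \<delta>" and "0 \<le> \<delta>"
    and x: "x \<in> insert \<infinity> (ereal ` f ` K)"
  shows "edist x (relabel K f g x) \<le> ereal \<delta>"
proof (cases "x = \<infinity>")
  case True
  then show ?thesis
    using \<open>0 \<le> \<delta>\<close> by (simp add: edist_def)
next
  case False
  then obtain s where "s \<in> K" "x = ereal (f s)"
    using x by auto
  then show ?thesis
    using close[of s] \<open>0 \<le> \<delta>\<close> relabel_eq[OF c] by (simp add: edist_def)
qed

lemma diag_dist_relabel_le:
  assumes c: "order_compatible K f g" and close: "\<And>s. s \<in> K \<Longrightarrow> \<bar>f s - g s\<bar> \<le> \<delta>"
    and b: "b \<in> ereal ` f ` K" and d: "d \<in> insert \<infinity> (ereal ` f ` K)"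
    and not_less: "\<not> relabel K f g b < relabel K f g d"
  shows "diag_dist (b, d) \<le> ereal \<delta>"
proof -
  obtain s where s: "s \<in> K" "b = ereal (f s)"
    using b by auto
  have "d \<noteq> \<infinity>"
    using not_less relabel_eq[OF c s(1)] s(2) by auto
  then obtain t where t: "t \<in> K" "d = ereal (f t)"
    using d by auto
  have "g t \<le> g s"
    using not_less relabel_eq[OF c] s t by simp
  then have "f t - f s \<le> 2 * \<delta>"
    using close[OF s(1)] close[OF t(1)] by linarith
  then show ?thesis
    unfolding s(2) t(2) diag_dist_def by (simp add: field_simps)
qed

lemma matching_cost_le:
  assumes "0 \<le> c"
    and "\<And>p q. (p, q) \<in># Mt \<Longrightarrow> pt_dist p q \<le> c"
    and "\<And>x. x \<in># A - image_mset fst Mt \<Longrightarrow> diag_dist x \<le> c"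
    and "\<And>x. x \<in># B - image_mset snd Mt \<Longrightarrow> diag_dist x \<le> c"
  shows "matching_cost Mt A B \<le> c"
  unfolding matching_cost_def using assms by (auto intro!: Sup_least)

lemma bottleneck_le_matching_cost: "partial_matching Mt A B \<Longrightarrow> bottleneck A B \<le> matching_cost Mt A B"
  unfolding bottleneck_def by (rule INF_lower[OF CollectI])

lemma bottleneck_sublevel_filt_le:
  assumes K: "fin_simplicial_complex K" and c: "order_compatible K f g"
    and close: "\<And>s. s \<in> K \<Longrightarrow> \<bar>f s - g s\<bar> \<le> \<delta>" and "0 \<le> \<delta>"
  shows "bottleneck (pdiagram k (sublevel_filt K f)) (pdiagram k (sublevel_filt K g)) \<le> ereal \<delta>"
proof -
  define L where "L = relabel K f g"
  define A where "A = pdiagram k (sublevel_filt K f)"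
  define A' where "A' = filter_mset (\<lambda>(b, d). L b < L d) A"
  define Mt where "Mt = image_mset (\<lambda>x. (x, map_prod L L x)) A'"
  have fst_Mt: "image_mset fst Mt = A'" and snd_Mt: "image_mset snd Mt = pdiagram k (sublevel_filt K g)"
    unfolding Mt_def A'_def A_def L_def pdiagram_sublevel_filt_relabel[OF K c]
    by (simp_all add: multiset.map_comp o_def)
  have A_values: "x \<in> ereal ` f ` K \<times> insert \<infinity> (ereal ` f ` K)" if "x \<in># A" for x
    using that unfolding A_def by (rule set_mset_pdiagram_sublevel_filt(2)[OF K])
  have "pt_dist p q \<le> ereal \<delta>" if "(p, q) \<in># Mt" for p q
  proof -
    have "p \<in># A" and q: "q = map_prod L L p"
      using that unfolding Mt_def A'_def by auto
    then have "fst p \<in> insert \<infinity> (ereal ` f ` K)" "snd p \<in> insert \<infinity> (ereal ` f ` K)"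
      using A_values[OF \<open>p \<in># A\<close>] by (simp_all add: mem_Times_iff)
    then show ?thesis
      using edist_relabel_le[OF c close \<open>0 \<le> \<delta>\<close>] unfolding q L_def pt_dist_def
      by (simp add: map_prod_def split_beta)
  qed
  moreover have "diag_dist x \<le> ereal \<delta>" if "x \<in># A - A'" for x
  proof -
    obtain b d where x: "x = (b, d)" by (cases x)
    have "A - A' = filter_mset (\<lambda>x. \<not> (case x of (b, d) \<Rightarrow> L b < L d)) A"
      using multiset_partition[of A "\<lambda>(b, d). L b < L d"] unfolding A'_def by (metis add_diff_cancel_left')
    then have "(b, d) \<in># A" "\<not> L b < L d"
      using that unfolding x by simp_all
    then show ?thesis
      unfolding x L_def using A_values diag_dist_relabel_le[OF c close] by blast
  qed
  ultimately have "matching_cost Mt A (pdiagram k (sublevel_filt K g)) \<le> ereal \<delta>"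
    using \<open>0 \<le> \<delta>\<close> by (intro matching_cost_le) (simp_all add: fst_Mt snd_Mt)
  moreover have "partial_matching Mt A (pdiagram k (sublevel_filt K g))"
    unfolding partial_matching_def fst_Mt snd_Mt A'_def by simp
  ultimately show ?thesis
    unfolding A_def using bottleneck_le_matching_cost order_trans by blast
qed

lemma d_B_sublevel_filt_le:
  assumes "fin_simplicial_complex K" "order_compatible K f g"
    and "\<And>s. s \<in> K \<Longrightarrow> \<bar>f s - g s\<bar> \<le> \<delta>" "0 \<le> \<delta>"
  shows "d_B (sublevel_filt K f) (sublevel_filt K g) \<le> ereal \<delta>"
  unfolding d_B_def using bottleneck_sublevel_filt_le[OF assms] by (rule SUP_least)

section \<open>Stability along the straight-line homotopy\<close>

definition face_monotone :: "'v set set \<Rightarrow> ('v set \<Rightarrow> real) \<Rightarrow> bool" where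
  "face_monotone K f \<longleftrightarrow> (\<forall>\<sigma>\<in>K. \<forall>\<tau>\<in>K. \<tau> \<subseteq> \<sigma> \<longrightarrow> f \<tau> \<le> f \<sigma>)"

lemma mono_filtration_sublevel_filt:
  assumes "fin_simplicial_complex K" "face_monotone K f"
  shows "mono_filtration (sublevel_filt K f)"
  using assms unfolding mono_filtration_def sublevel_filt_def subcomplex_def face_monotone_def
  by (auto intro: order_trans)

lemma mf_size_sublevel_filt: "mf_size (sublevel_filt K f) = card K"
  unfolding mf_size_def sublevel_filt_def by simp

definition interp :: "('v set \<Rightarrow> real) \<Rightarrow> ('v set \<Rightarrow> real) \<Rightarrow> real \<Rightarrow> 'v set \<Rightarrow> real" where
  "interp f g t \<sigma> = (1 - t) * f \<sigma> + t * g \<sigma>"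

text \<open>The times \<open>t\<close> at which \<open>interp f g t\<close> takes equal values on two simplices it orders
  differently at other times.\<close>
definition crossing_times :: "'v set set \<Rightarrow> ('v set \<Rightarrow> real) \<Rightarrow> ('v set \<Rightarrow> real) \<Rightarrow> real set" where
  "crossing_times K f g = (\<lambda>(\<sigma>, \<tau>). (f \<sigma> - f \<tau>) / ((f \<sigma> - f \<tau>) - (g \<sigma> - g \<tau>))) `
     {(\<sigma>, \<tau>) \<in> K \<times> K. f \<sigma> - f \<tau> \<noteq> g \<sigma> - g \<tau>}"

lemma interp_0 [simp]: "interp f g 0 = f"
  and interp_1 [simp]: "interp f g 1 = g"
  unfolding interp_def by auto

lemma finite_crossing_times: "finite K \<Longrightarrow> finite (crossing_times K f g)"
  unfolding crossing_times_def by (rule finite_imageI) (rule finite_subset[of _ "K \<times> K"], auto)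

lemma face_monotone_interp:
  assumes "face_monotone K f" "face_monotone K g" "0 \<le> t" "t \<le> 1"
  shows "face_monotone K (interp f g t)"
  unfolding face_monotone_def interp_def
proof (intro ballI impI)
  fix \<sigma> \<tau> assume "\<sigma> \<in> K" "\<tau> \<in> K" "\<tau> \<subseteq> \<sigma>"
  then have "f \<tau> \<le> f \<sigma>" "g \<tau> \<le> g \<sigma>"
    using assms(1,2) unfolding face_monotone_def by auto
  then show "(1 - t) * f \<tau> + t * g \<tau> \<le> (1 - t) * f \<sigma> + t * g \<sigma>"
    using assms(3,4) by (intro add_mono mult_left_mono) auto
qed

lemma interp_dist_le:
  assumes "\<bar>f \<sigma> - g \<sigma>\<bar> \<le> D"
  shows "\<bar>interp f g a \<sigma> - interp f g b \<sigma>\<bar> \<le> \<bar>b - a\<bar> * D"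
proof -
  have "\<bar>interp f g a \<sigma> - interp f g b \<sigma>\<bar> = \<bar>b - a\<bar> * \<bar>f \<sigma> - g \<sigma>\<bar>"
    unfolding interp_def by (simp add: abs_mult[symmetric] algebra_simps)
  then show ?thesis
    using assms by (simp add: mult_left_mono)
qed

lemma affine_sign_change_root:
  fixes A B x y :: real
  assumes "A + x * (B - A) \<le> 0" "0 < A + y * (B - A)"
  shows "A \<noteq> B" "min x y \<le> A / (A - B)" "A / (A - B) \<le> max x y" "A / (A - B) \<noteq> y"
proof -
  show "A \<noteq> B"
    using assms by auto
  then have affine: "A + t * (B - A) = (B - A) * (t - A / (A - B))" for t
    by (simp add: field_simps)
  have "(B - A) * (x - A / (A - B)) \<le> 0" "0 < (B - A) * (y - A / (A - B))"
    using assms unfolding affine .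
  then have "x \<le> A / (A - B) \<and> A / (A - B) < y \<or> y < A / (A - B) \<and> A / (A - B) \<le> x"
    by (auto simp: mult_le_0_iff zero_less_mult_iff)
  then show "min x y \<le> A / (A - B)" "A / (A - B) \<le> max x y" "A / (A - B) \<noteq> y"
    by auto
qed

lemma order_compatible_interp:
  assumes no_crossing: "crossing_times K f g \<inter> {a<..<b} = {}"
    and s: "a < s" "s < b" and c: "a \<le> c" "c \<le> b"
  shows "order_compatible K (interp f g s) (interp f g c)"
  unfolding order_compatible_def
proof (intro ballI impI)
  fix \<sigma> \<tau> assume "\<sigma> \<in> K" "\<tau> \<in> K" and le: "interp f g s \<sigma> \<le> interp f g s \<tau>"
  let ?A = "f \<sigma> - f \<tau>" and ?B = "g \<sigma> - g \<tau>"
  have diff: "interp f g t \<sigma> - interp f g t \<tau> = ?A + t * (?B - ?A)" for t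
    unfolding interp_def by (simp add: algebra_simps)
  show "interp f g c \<sigma> \<le> interp f g c \<tau>"
  proof (rule ccontr)
    assume "\<not> interp f g c \<sigma> \<le> interp f g c \<tau>"
    then have "?A + s * (?B - ?A) \<le> 0" "0 < ?A + c * (?B - ?A)"
      using le diff[of s] diff[of c] by auto
    note root = affine_sign_change_root[OF this]
    then have "?A / (?A - ?B) \<in> crossing_times K f g"
      unfolding crossing_times_def using \<open>\<sigma> \<in> K\<close> \<open>\<tau> \<in> K\<close> by (intro image_eqI[of _ _ "(\<sigma>, \<tau>)"]) auto
    moreover have "?A / (?A - ?B) \<in> {a<..<b}"
      using root(2-4) s c by (auto simp: min_def max_def split: if_splits)
    ultimately show False
      using no_crossing by blast
  qed
qed

locale stable_feature_map =
  fixes \<phi> :: "'v monofilt \<Rightarrow> real \<times> real \<Rightarrow> real" and v3 :: real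
  assumes v3_pos: "0 < v3"
    and stable: "\<And>M N x. mono_filtration M \<Longrightarrow> mono_filtration N \<Longrightarrow> mf_size M = mf_size N \<Longrightarrow>
      x \<in> Delta1 \<Longrightarrow> ereal \<bar>\<phi> M x - \<phi> N x\<bar> \<le> ereal (v3 * real (mf_size M)) * d_B M N"
begin

lemma feature_dist_order_compatible:
  assumes K: "fin_simplicial_complex K" and f: "face_monotone K f" and g: "face_monotone K g"
    and c: "order_compatible K f g" and close: "\<And>\<sigma>. \<sigma> \<in> K \<Longrightarrow> \<bar>f \<sigma> - g \<sigma>\<bar> \<le> \<delta>" and "0 \<le> \<delta>"
    and x: "x \<in> Delta1"
  shows "\<bar>\<phi> (sublevel_filt K f) x - \<phi> (sublevel_filt K g) x\<bar> \<le> v3 * real (card K) * \<delta>"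
proof -
  have "ereal \<bar>\<phi> (sublevel_filt K f) x - \<phi> (sublevel_filt K g) x\<bar>
      \<le> ereal (v3 * real (card K)) * d_B (sublevel_filt K f) (sublevel_filt K g)"
    using stable[OF mono_filtration_sublevel_filt[OF K f] mono_filtration_sublevel_filt[OF K g] _ x]
    by (simp add: mf_size_sublevel_filt)
  also have "\<dots> \<le> ereal (v3 * real (card K)) * ereal \<delta>"
  proof (rule ereal_mult_left_mono[OF d_B_sublevel_filt_le[OF K c close \<open>0 \<le> \<delta>\<close>]])
    show "0 \<le> ereal (v3 * real (card K))"
      using v3_pos by (simp only: ereal_less_eq(5)) simp
  qed
  finally show ?thesis by simp
qed

text \<open>Without crossing times in between, every interpolant is order-compatible with the midpoint one.\<close>
lemma feature_dist_interp_no_crossing: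
  assumes K: "fin_simplicial_complex K" and f: "face_monotone K f" and g: "face_monotone K g"
    and close: "\<And>\<sigma>. \<sigma> \<in> K \<Longrightarrow> \<bar>f \<sigma> - g \<sigma>\<bar> \<le> D" and "0 \<le> D" and x: "x \<in> Delta1"
    and no_crossing: "crossing_times K f g \<inter> {a<..<b} = {}" and ab: "0 \<le> a" "a < b" "b \<le> 1"
  shows "\<bar>\<phi> (sublevel_filt K (interp f g a)) x - \<phi> (sublevel_filt K (interp f g b)) x\<bar>
    \<le> v3 * real (card K) * ((b - a) * D)"
proof -
  let ?dist = "\<lambda>a b. \<bar>\<phi> (sublevel_filt K (interp f g a)) x - \<phi> (sublevel_filt K (interp f g b)) x\<bar>"
  define s where "s = (a + b) / 2"
  have s: "a < s" "s < b"
    using ab unfolding s_def by auto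
  have mono: "face_monotone K (interp f g t)" if "a \<le> t" "t \<le> b" for t
    using face_monotone_interp[OF f g] that ab by auto
  have close_s: "\<bar>interp f g s \<sigma> - interp f g t \<sigma>\<bar> \<le> \<bar>s - t\<bar> * D" if "\<sigma> \<in> K" for \<sigma> t
    using interp_dist_le[where f = f and g = g, OF close[OF that]] by (simp add: abs_minus_commute)
  have "?dist s a \<le> v3 * real (card K) * (\<bar>s - a\<bar> * D)"
    using s ab \<open>0 \<le> D\<close>
    by (intro feature_dist_order_compatible[OF K mono mono order_compatible_interp[OF no_crossing s] close_s _ x]) auto
  moreover have "?dist s b \<le> v3 * real (card K) * (\<bar>s - b\<bar> * D)"
    using s ab \<open>0 \<le> D\<close>
    by (intro feature_dist_order_compatible[OF K mono mono order_compatible_interp[OF no_crossing s] close_s _ x]) auto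
  ultimately show ?thesis
    using s by (simp add: abs_minus_commute algebra_simps)
qed

lemma feature_dist_interp:
  assumes K: "fin_simplicial_complex K" and f: "face_monotone K f" and g: "face_monotone K g"
    and close: "\<And>\<sigma>. \<sigma> \<in> K \<Longrightarrow> \<bar>f \<sigma> - g \<sigma>\<bar> \<le> D" and "0 \<le> D" and x: "x \<in> Delta1"
  shows "0 \<le> a \<Longrightarrow> a \<le> b \<Longrightarrow> b \<le> 1 \<Longrightarrow>
    \<bar>\<phi> (sublevel_filt K (interp f g a)) x - \<phi> (sublevel_filt K (interp f g b)) x\<bar> \<le> v3 * real (card K) * ((b - a) * D)"
proof (induction "card (crossing_times K f g \<inter> {a<..<b})" arbitrary: a b rule: less_induct)
  case less
  let ?dist = "\<lambda>a b. \<bar>\<phi> (sublevel_filt K (interp f g a)) x - \<phi> (sublevel_filt K (interp f g b)) x\<bar>"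
  show ?case
  proof (cases "crossing_times K f g \<inter> {a<..<b} = {}")
    case True
    then show ?thesis
      using feature_dist_interp_no_crossing[OF assms] less.prems by (cases "a = b") simp_all
  next
    case False
    then obtain t where t: "t \<in> crossing_times K f g" "a < t" "t < b"
      by auto
    have fin: "finite (crossing_times K f g)"
      using K by (simp add: finite_crossing_times fin_simplicial_complex_finite)
    have "card (crossing_times K f g \<inter> {a<..<t}) < card (crossing_times K f g \<inter> {a<..<b})"
      using fin t by (auto intro!: psubset_card_mono)
    then have "?dist a t \<le> v3 * real (card K) * ((t - a) * D)"
      using less.hyps less.prems t by simp
    moreover have "card (crossing_times K f g \<inter> {t<..<b}) < card (crossing_times K f g \<inter> {a<..<b})"
      using fin t by (auto intro!: psubset_card_mono)
    then have "?dist t b \<le> v3 * real (card K) * ((b - t) * D)"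
      using less.hyps less.prems t by simp
    ultimately show ?thesis
      by (simp add: algebra_simps)
  qed
qed

lemma feature_dist_sublevel_filt:
  assumes "fin_simplicial_complex K" "face_monotone K f" "face_monotone K g"
    and "\<And>\<sigma>. \<sigma> \<in> K \<Longrightarrow> \<bar>f \<sigma> - g \<sigma>\<bar> \<le> D" "0 \<le> D" "x \<in> Delta1"
  shows "\<bar>\<phi> (sublevel_filt K f) x - \<phi> (sublevel_filt K g) x\<bar> \<le> v3 * real (card K) * D"
  using feature_dist_interp[OF assms, of 0 1] by simp

end

section \<open>Slices and the L2 estimate\<close>

lemma emeasure_lborel_Times:
  assumes "A \<in> sets lborel" "B \<in> sets lborel"
  shows "emeasure (lborel :: ('a::euclidean_space \<times> 'b::euclidean_space) measure) (A \<times> B)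
    = emeasure lborel A * emeasure lborel B"
  using assms by (simp add: lborel_prod[symmetric] lborel.emeasure_pair_measure_Times)

lemma rectangle_sets_lborel: "({0..w} \<times> {0..h} :: (real \<times> real) set) \<in> sets lborel"
  unfolding sets_lborel by (intro borel_closed closed_Times closed_atLeastAtMost)

lemma emeasure_lborel_rectangle:
  assumes "0 \<le> w" "0 \<le> h"
  shows "emeasure lborel ({0..w} \<times> {0..h} :: (real \<times> real) set) = ennreal (w * h)"
  using assms by (simp add: emeasure_lborel_Times ennreal_mult)

lemma line_dir_pos:
  assumes "vlt p q"
  shows "0 < fst (line_dir p q)" "0 < snd (line_dir p q)" "0 < norm (q - p)"
proof -
  have "q \<noteq> p"
    using assms unfolding vlt_def by auto
  then show "0 < norm (q - p)" by simp
  then show "0 < fst (line_dir p q)" "0 < snd (line_dir p q)"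
    unfolding line_dir_def using assms unfolding vlt_def by auto
qed

lemma line_hat_pos: "vlt p q \<Longrightarrow> 0 < line_hat p q"
  unfolding line_hat_def using line_dir_pos by simp

lemma line_lam_in_Delta1: "vlt p q \<Longrightarrow> (line_lam_p p q, line_lam_q p q) \<in> Delta1"
  unfolding Delta1_def line_lam_q_def using line_dir_pos(3) by auto

text \<open>The parameter at which the line through \<open>p\<close> and \<open>q\<close> enters the upper quadrant of \<open>F \<sigma>\<close>.\<close>
definition slice_fun :: "('v set \<Rightarrow> real \<times> real) \<Rightarrow> real \<times> real \<Rightarrow> real \<times> real \<Rightarrow> 'v set \<Rightarrow> real" where
  "slice_fun F p q \<sigma> = max ((fst (F \<sigma>) - fst (line_base p q)) / fst (line_dir p q))
                            ((snd (F \<sigma>) - snd (line_base p q)) / snd (line_dir p q))"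

lemma slice_sublevel_bifilt:
  assumes "vlt p q"
  shows "slice K (sublevel_bifilt K F) p q = sublevel_filt K (slice_fun F p q)"
proof -
  have a: "0 < fst (line_dir p q)" "0 < snd (line_dir p q)"
    using line_dir_pos[OF assms] by auto
  have "{\<sigma> \<in> K. vle (F \<sigma>) (line_base p q + \<alpha> *\<^sub>R line_dir p q)} = {\<sigma> \<in> K. slice_fun F p q \<sigma> \<le> \<alpha>}" for \<alpha>
    unfolding vle_def slice_fun_def using a by (auto simp: pos_divide_le_eq algebra_simps)
  then show ?thesis
    unfolding slice_def sublevel_filt_def sublevel_bifilt_def by simp
qed

lemma face_monotone_slice_fun:
  assumes "monotone_filter K F" "vlt p q"
  shows "face_monotone K (slice_fun F p q)"
  unfolding face_monotone_def
proof (intro ballI impI)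
  fix \<sigma> \<tau> assume "\<sigma> \<in> K" "\<tau> \<in> K" "\<tau> \<subseteq> \<sigma>"
  then have "fst (F \<tau>) \<le> fst (F \<sigma>)" "snd (F \<tau>) \<le> snd (F \<sigma>)"
    using assms(1) unfolding monotone_filter_def vle_def by auto
  then show "slice_fun F p q \<tau> \<le> slice_fun F p q \<sigma>"
    unfolding slice_fun_def using line_dir_pos[OF assms(2)]
    by (intro max.mono divide_right_mono diff_right_mono) auto
qed

lemma sup_dist_ge:
  assumes "finite K" "\<sigma> \<in> K"
  shows "\<bar>fst (F \<sigma>) - fst (G \<sigma>)\<bar> \<le> sup_dist K F G" "\<bar>snd (F \<sigma>) - snd (G \<sigma>)\<bar> \<le> sup_dist K F G"
proof -
  have "max \<bar>fst (F \<sigma>) - fst (G \<sigma>)\<bar> \<bar>snd (F \<sigma>) - snd (G \<sigma>)\<bar> \<le> sup_dist K F G"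
    unfolding sup_dist_def using assms by (intro Max_ge) auto
  then show "\<bar>fst (F \<sigma>) - fst (G \<sigma>)\<bar> \<le> sup_dist K F G" "\<bar>snd (F \<sigma>) - snd (G \<sigma>)\<bar> \<le> sup_dist K F G"
    by auto
qed

lemma sup_dist_nonneg: "finite K \<Longrightarrow> 0 \<le> sup_dist K F G"
  unfolding sup_dist_def by (intro Max_ge) auto

lemma abs_max_diff_le: "\<bar>max x1 x2 - max y1 y2\<bar> \<le> max \<bar>x1 - y1\<bar> \<bar>x2 - y2\<bar>"
  for x1 x2 y1 y2 :: real
  by (simp add: max_def abs_if)

lemma slice_fun_dist_le:
  assumes "finite K" "vlt p q" "\<sigma> \<in> K"
  shows "\<bar>slice_fun F p q \<sigma> - slice_fun G p q \<sigma>\<bar> \<le> sup_dist K F G / line_hat p q"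
proof -
  let ?a1 = "fst (line_dir p q)" and ?a2 = "snd (line_dir p q)" and ?S = "sup_dist K F G"
  have a: "0 < ?a1" "0 < ?a2" "line_hat p q \<le> ?a1" "line_hat p q \<le> ?a2"
    using line_dir_pos[OF assms(2)] unfolding line_hat_def by auto
  let ?b1 = "fst (line_base p q)" and ?b2 = "snd (line_base p q)"
  have "\<bar>slice_fun F p q \<sigma> - slice_fun G p q \<sigma>\<bar>
      \<le> max \<bar>(fst (F \<sigma>) - ?b1) / ?a1 - (fst (G \<sigma>) - ?b1) / ?a1\<bar> \<bar>(snd (F \<sigma>) - ?b2) / ?a2 - (snd (G \<sigma>) - ?b2) / ?a2\<bar>"
    unfolding slice_fun_def by (rule abs_max_diff_le)
  also have "\<dots> = max (\<bar>fst (F \<sigma>) - fst (G \<sigma>)\<bar> / ?a1) (\<bar>snd (F \<sigma>) - snd (G \<sigma>)\<bar> / ?a2)"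
    using a(1,2) by (simp add: diff_divide_distrib[symmetric])
  also have "\<dots> \<le> ?S / line_hat p q"
    using frac_le[OF sup_dist_nonneg[OF assms(1)] sup_dist_ge(1)[OF assms(1,3)] line_hat_pos[OF assms(2)] a(3)]
      frac_le[OF sup_dist_nonneg[OF assms(1)] sup_dist_ge(2)[OF assms(1,3)] line_hat_pos[OF assms(2)] a(4)]
    by simp
  finally show ?thesis .
qed

context stable_feature_map
begin

lemma Phi_diff_sq_le:
  assumes K: "fin_simplicial_complex K" and F: "monotone_filter K F" and G: "monotone_filter K G"
    and z: "z \<in> Delta2"
  shows "(Phi \<phi> R K (sublevel_bifilt K F) z - Phi \<phi> R K (sublevel_bifilt K G) z)\<^sup>2
    \<le> (v3 * real (card K) * sup_dist K F G)\<^sup>2 * indicator (R \<times> R) z"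
proof -
  obtain p q where z_pq: "z = (p, q)" by (cases z)
  have pq: "vlt p q"
    using z unfolding Delta2_def z_pq by simp
  have fin: "finite K"
    using K by (rule fin_simplicial_complex_finite)
  define lam where "lam = (line_lam_p p q, line_lam_q p q)"
  define dphi where "dphi = \<phi> (sublevel_filt K (slice_fun F p q)) lam - \<phi> (sublevel_filt K (slice_fun G p q)) lam"
  have hat: "0 < line_hat p q"
    using pq by (rule line_hat_pos)
  have "\<bar>dphi\<bar> \<le> v3 * real (card K) * (sup_dist K F G / line_hat p q)"
    unfolding dphi_def lam_def
    using hat sup_dist_nonneg[OF fin] slice_fun_dist_le[OF fin pq]
    by (intro feature_dist_sublevel_filt[OF K face_monotone_slice_fun[OF F pq] face_monotone_slice_fun[OF G pq]]
        line_lam_in_Delta1[OF pq]) simp_all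
  then have "\<bar>line_hat p q * dphi\<bar> \<le> v3 * real (card K) * sup_dist K F G"
    using hat by (simp add: abs_mult field_simps)
  then have "(line_hat p q * dphi)\<^sup>2 \<le> (v3 * real (card K) * sup_dist K F G)\<^sup>2"
    by (metis abs_ge_zero power2_abs power_mono)
  moreover have "Phi \<phi> R K (sublevel_bifilt K F) z - Phi \<phi> R K (sublevel_bifilt K G) z
      = indicator (R \<times> R) z * (line_hat p q * dphi)"
    unfolding Phi_def z_pq dphi_def lam_def Let_def
    by (simp add: slice_sublevel_bifilt[OF pq] indicator_def algebra_simps)
  ultimately show ?thesis
    by (simp add: indicator_def power_mult_distrib)
qed

lemma L2_dist_sq_Phi_le:
  assumes "fin_simplicial_complex K" "monotone_filter K F" "monotone_filter K G" "R \<in> sets lborel"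
  shows "L2_dist_sq (Phi \<phi> R K (sublevel_bifilt K F)) (Phi \<phi> R K (sublevel_bifilt K G))
    \<le> ennreal ((v3 * real (card K) * sup_dist K F G)\<^sup>2) * emeasure lborel (R \<times> R)"
proof -
  let ?c = "(v3 * real (card K) * sup_dist K F G)\<^sup>2"
  have "ennreal ((Phi \<phi> R K (sublevel_bifilt K F) z - Phi \<phi> R K (sublevel_bifilt K G) z)\<^sup>2) * indicator Delta2 z
      \<le> ennreal ?c * indicator (R \<times> R) z" for z
    using Phi_diff_sq_le[OF assms(1-3), of z R]
    by (cases "z \<in> Delta2") (auto simp: indicator_def intro: ennreal_leI)
  then have "L2_dist_sq (Phi \<phi> R K (sublevel_bifilt K F)) (Phi \<phi> R K (sublevel_bifilt K G))
      \<le> (\<integral>\<^sup>+ z. ennreal ?c * indicator (R \<times> R) z \<partial>lborel)"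
    unfolding L2_dist_sq_def by (rule nn_integral_mono)
  also have "\<dots> = ennreal ?c * emeasure lborel (R \<times> R)"
  proof (rule nn_integral_cmult_indicator)
    have "R \<times> R \<in> sets (lborel \<Otimes>\<^sub>M lborel)"
      using assms(4) assms(4) by (rule pair_measureI)
    then show "R \<times> R \<in> sets lborel"
      by (simp only: lborel_prod)
  qed
  finally show ?thesis .
qed


lemma L2_dist_sq_Phi_rectangle_le:
  assumes "fin_simplicial_complex K" "monotone_filter K F" "monotone_filter K G" "0 \<le> w" "0 \<le> h"
  shows "L2_dist_sq (Phi \<phi> ({0..w} \<times> {0..h}) K (sublevel_bifilt K F)) (Phi \<phi> ({0..w} \<times> {0..h}) K (sublevel_bifilt K G))
    \<le> ennreal ((v3 * real (card K) * (w * h) * sup_dist K F G)\<^sup>2)"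
proof -
  let ?R = "{0..w} \<times> {0..h} :: (real \<times> real) set"
  have "emeasure lborel (?R \<times> ?R) = emeasure lborel ?R * emeasure lborel ?R"
    by (rule emeasure_lborel_Times[OF rectangle_sets_lborel rectangle_sets_lborel])
  also have "\<dots> = ennreal ((w * h)\<^sup>2)"
    using assms(4,5) by (simp add: emeasure_lborel_rectangle ennreal_mult[symmetric] power2_eq_square)
  finally have "L2_dist_sq (Phi \<phi> ?R K (sublevel_bifilt K F)) (Phi \<phi> ?R K (sublevel_bifilt K G))
      \<le> ennreal ((v3 * real (card K) * sup_dist K F G)\<^sup>2) * ennreal ((w * h)\<^sup>2)"
    using L2_dist_sq_Phi_le[OF assms(1-3) rectangle_sets_lborel[of w h]] by simp
  then show ?thesis
    by (simp add: ennreal_mult[symmetric] power_mult_distrib mult_ac)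
qed

end

lemma internally_stable_imp_stable_feature_map:
  assumes "internally_stable \<phi>"
  obtains v3 where "stable_feature_map \<phi> v3"
proof -
  obtain v3 where v3: "0 < v3" and stable: "\<And>M N n x. mono_filtration M \<and> mono_filtration N
      \<and> mf_size M = n \<and> mf_size N = n \<and> x \<in> Delta1 \<longrightarrow> ereal \<bar>\<phi> M x - \<phi> N x\<bar> \<le> ereal (v3 * real n) * d_B M N"
    using assms unfolding internally_stable_def by blast
  have "stable_feature_map \<phi> v3"
    using v3 stable unfolding stable_feature_map_def by simp
  then show ?thesis ..
qed

theorem corollary1:
  fixes \<phi> :: "'v monofilt \<Rightarrow> real \<times> real \<Rightarrow> real"
  assumes "feature_map \<phi>" and "absolutely_bounded \<phi>" and "internally_stable \<phi>"
  shows "\<exists>C\<ge>0. \<forall>(K::'v set set) F G (w::real) (h::real).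
           fin_simplicial_complex K \<and> monotone_filter K F \<and> monotone_filter K G \<and> 0 \<le> w \<and> 0 \<le> h \<longrightarrow>
           L2_dist_sq (Phi \<phi> ({0..w} \<times> {0..h}) K (sublevel_bifilt K F))
                      (Phi \<phi> ({0..w} \<times> {0..h}) K (sublevel_bifilt K G))
             \<le> ennreal ((C * real (card K) * (w * h) * sup_dist K F G)\<^sup>2)"
proof -
  \<comment> \<open>Only internal stability is needed: \<open>L2_dist_sq\<close> is a nonnegative integral, so no measurability
    or integrability of \<open>Phi\<close> has to be established.\<close>
  obtain v3 where "stable_feature_map \<phi> v3"
    using assms(3) by (rule internally_stable_imp_stable_feature_map)
  then interpret stable_feature_map \<phi> v3 .
  have "0 \<le> v3"
    using v3_pos by simp
  with L2_dist_sq_Phi_rectangle_le show ?thesis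
    by blast
qed

end
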